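(* Let $d\ge2$, $\alpha\in(0,1)$, $T>0$ and $R>0$. Then there are positive constants $m=m(d,\alpha)$ and $C=C(T,R,d,\alpha)$ such that for any $u\in C^{2+\alpha}_s(\overline{\mathbb H}_T)$ with compact support in $[0,\infty)\times\bar B_R(x^0)$ for some $x^0\in\partial\mathbb H$, and any $\varepsilon\in(0,1)$, we have for all $1\le i,j\le d$: $$\|u\|_{C^\alpha_s(\overline{\mathbb H}_T)}\le\varepsilon\|u\|_{C^{2+\alpha}_s(\overline{\mathbb H}_T)}+C\varepsilon^{-m}\|u\|_{C(\overline{\mathbb H}_T)},$$ $$\|u_{x_i}\|_{C(\overline{\mathbb H}_T)}\le\varepsilon\|u\|_{C^{2+\alpha}_s(\overline{\mathbb H}_T)}+C\varepsilon^{-m}\|u\|_{C(\overline{\mathbb H}_T)},$$ $$\|x_du_{x_i}\|_{C^\alpha_s(\overline{\mathbb H}_T)}\le\varepsilon\|u\|_{C^{2+\alpha}_s(\overline{\mathbb H}_T)}+C\varepsilon^{-m}\|u\|_{C(\overline{\mathbb H}_T)},$$ $$\|x_du_{x_ix_j}\|_{C(\overline{\mathbb H}_T)}\le\varepsilon\|u\|_{C^{2+\alpha}_s(\overline{\mathbb H}_T)}+C\varepsilon^{-m}\|u\|_{C(\overline{\mathbb H}_T)}.$$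
   Context: $\mathbb H=\mathbb R^{d-1}\times(0,\infty)$, $\overline{\mathbb H}=\mathbb R^{d-1}\times[0,\infty)$, $\partial\mathbb H=\{x_d=0\}$, $\mathbb H_T=(0,T)\times\mathbb H$, $\overline{\mathbb H}_T=[0,T]\times\overline{\mathbb H}$. For $x^0\in\overline{\mathbb H}$, $\bar B_R(x^0)=\{x\in\overline{\mathbb H}:|x-x^0|\le R\}$. Cycloidal distance between $P_k=(t_k,x^k)$: $s(P_1,P_2)=\frac{\sum_{i=1}^d|x^1_i-x^2_i|}{\sqrt{x^1_d}+\sqrt{x^2_d}+\sqrt{\sum_{i=1}^{d-1}|x^1_i-x^2_i|}}+\sqrt{|t_1-t_2|}$. For a set $S$: $\|u\|_{C(S)}=\sup_S|u|$; $[u]_{C^\alpha_s(S)}=\sup_{P_1\ne P_2\in S}|u(P_1)-u(P_2)|/s^\alpha(P_1,P_2)$; $\|u\|_{C^\alpha_s(S)}=\|u\|_{C(S)}+[u]_{C^\alpha_s(S)}$; $\|u\|_{C^{2+\alpha}_s(S)}=\|u\|_{C^\alpha_s(S)}+\|u_t\|_{C^\alpha_s(S)}+\max_i\|u_{x_i}\|_{C^\alpha_s(S)}+\max_{i,j}\|x_du_{x_ix_j}\|_{C^\alpha_s(S)}$, and $C^{2+\alpha}_s(S)$ is the space of functions for which this is finite. *)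

theory Defs
  imports "HOL-Analysis.Analysis"
begin

text \<open>Points of R^d are modelled as functions nat => real, using coordinates 1..d
  (all other coordinates are 0).  x_d is the coordinate d.  Space-time points are
  pairs (t, x).\<close>

definition Hbar :: "nat \<Rightarrow> (nat \<Rightarrow> real) set" where
  "Hbar d = {x. (\<forall>i. i \<notin> {1..d} \<longrightarrow> x i = 0) \<and> x d \<ge> 0}"

definition Hint :: "nat \<Rightarrow> (nat \<Rightarrow> real) set" where
  "Hint d = {x. (\<forall>i. i \<notin> {1..d} \<longrightarrow> x i = 0) \<and> x d > 0}"

definition HTbar :: "nat \<Rightarrow> real \<Rightarrow> (real \<times> (nat \<Rightarrow> real)) set" where
  "HTbar d T = {(t, x). 0 \<le> t \<and> t \<le> T \<and> x \<in> Hbar d}"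

definition HTint :: "nat \<Rightarrow> real \<Rightarrow> (real \<times> (nat \<Rightarrow> real)) set" where
  "HTint d T = {(t, x). 0 < t \<and> t < T \<and> x \<in> Hint d}"

definition eucl_dist :: "nat \<Rightarrow> (nat \<Rightarrow> real) \<Rightarrow> (nat \<Rightarrow> real) \<Rightarrow> real" where
  "eucl_dist d x y = sqrt (\<Sum>i=1..d. (x i - y i)^2)"

definition Bbar :: "nat \<Rightarrow> (nat \<Rightarrow> real) \<Rightarrow> real \<Rightarrow> (nat \<Rightarrow> real) set" where
  "Bbar d x0 R = {x \<in> Hbar d. eucl_dist d x x0 \<le> R}"

definition cyc_dist :: "nat \<Rightarrow> real \<times> (nat \<Rightarrow> real) \<Rightarrow> real \<times> (nat \<Rightarrow> real) \<Rightarrow> real" where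
  "cyc_dist d P Q =
     (\<Sum>i=1..d. \<bar>snd P i - snd Q i\<bar>) /
       (sqrt (snd P d) + sqrt (snd Q d) + sqrt (\<Sum>i=1..d-1. \<bar>snd P i - snd Q i\<bar>))
     + sqrt \<bar>fst P - fst Q\<bar>"

definition sup_norm :: "'p set \<Rightarrow> ('p \<Rightarrow> real) \<Rightarrow> real" where
  "sup_norm S f = Sup ((\<lambda>P. \<bar>f P\<bar>) ` S)"

definition holder_quots :: "nat \<Rightarrow> real \<Rightarrow> (real \<times> (nat \<Rightarrow> real)) set
    \<Rightarrow> (real \<times> (nat \<Rightarrow> real) \<Rightarrow> real) \<Rightarrow> real set" where
  "holder_quots d \<alpha> S f =
     {\<bar>f P - f Q\<bar> / (cyc_dist d P Q) powr \<alpha> | P Q. P \<in> S \<and> Q \<in> S \<and> P \<noteq> Q}"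

definition holder_semi :: "nat \<Rightarrow> real \<Rightarrow> (real \<times> (nat \<Rightarrow> real)) set
    \<Rightarrow> (real \<times> (nat \<Rightarrow> real) \<Rightarrow> real) \<Rightarrow> real" where
  "holder_semi d \<alpha> S f = Sup (holder_quots d \<alpha> S f)"

definition holder_norm :: "nat \<Rightarrow> real \<Rightarrow> (real \<times> (nat \<Rightarrow> real)) set
    \<Rightarrow> (real \<times> (nat \<Rightarrow> real) \<Rightarrow> real) \<Rightarrow> real" where
  "holder_norm d \<alpha> S f = sup_norm S f + holder_semi d \<alpha> S f"

definition in_Calpha :: "nat \<Rightarrow> real \<Rightarrow> (real \<times> (nat \<Rightarrow> real)) set
    \<Rightarrow> (real \<times> (nat \<Rightarrow> real) \<Rightarrow> real) \<Rightarrow> bool" where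
  "in_Calpha d \<alpha> S f \<longleftrightarrow> bdd_above ((\<lambda>P. \<bar>f P\<bar>) ` S) \<and> bdd_above (holder_quots d \<alpha> S f)"

text \<open>ut, ux i, uxx i j (functions on the closed layer) are the classical derivatives
  u_t, u_{x_i}, u_{x_i x_j} = (u_{x_i})_{x_j} of u at every interior point;
  on the boundary they are the (necessarily unique, continuous) extensions.\<close>
definition are_derivs :: "nat \<Rightarrow> real \<Rightarrow> (real \<times> (nat \<Rightarrow> real) \<Rightarrow> real)
    \<Rightarrow> (real \<times> (nat \<Rightarrow> real) \<Rightarrow> real) \<Rightarrow> (nat \<Rightarrow> real \<times> (nat \<Rightarrow> real) \<Rightarrow> real)
    \<Rightarrow> (nat \<Rightarrow> nat \<Rightarrow> real \<times> (nat \<Rightarrow> real) \<Rightarrow> real) \<Rightarrow> bool" where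
  "are_derivs d T u ut ux uxx \<longleftrightarrow>
     (\<forall>t x. (t, x) \<in> HTint d T \<longrightarrow>
        ((\<lambda>s. u (s, x)) has_real_derivative ut (t, x)) (at t) \<and>
        (\<forall>i\<in>{1..d}. ((\<lambda>s. u (t, x(i := s))) has_real_derivative ux i (t, x)) (at (x i))) \<and>
        (\<forall>i\<in>{1..d}. \<forall>j\<in>{1..d}.
           ((\<lambda>s. ux i (t, x(j := s))) has_real_derivative uxx i j (t, x)) (at (x j))))"

definition in_C2a :: "nat \<Rightarrow> real \<Rightarrow> real \<Rightarrow> (real \<times> (nat \<Rightarrow> real) \<Rightarrow> real)
    \<Rightarrow> (real \<times> (nat \<Rightarrow> real) \<Rightarrow> real) \<Rightarrow> (nat \<Rightarrow> real \<times> (nat \<Rightarrow> real) \<Rightarrow> real)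
    \<Rightarrow> (nat \<Rightarrow> nat \<Rightarrow> real \<times> (nat \<Rightarrow> real) \<Rightarrow> real) \<Rightarrow> bool" where
  "in_C2a d \<alpha> T u ut ux uxx \<longleftrightarrow>
     are_derivs d T u ut ux uxx \<and>
     in_Calpha d \<alpha> (HTbar d T) u \<and> in_Calpha d \<alpha> (HTbar d T) ut \<and>
     (\<forall>i\<in>{1..d}. in_Calpha d \<alpha> (HTbar d T) (ux i)) \<and>
     (\<forall>i\<in>{1..d}. \<forall>j\<in>{1..d}. in_Calpha d \<alpha> (HTbar d T) (\<lambda>P. snd P d * uxx i j P))"

definition C2a_norm :: "nat \<Rightarrow> real \<Rightarrow> real \<Rightarrow> (real \<times> (nat \<Rightarrow> real) \<Rightarrow> real)
    \<Rightarrow> (real \<times> (nat \<Rightarrow> real) \<Rightarrow> real) \<Rightarrow> (nat \<Rightarrow> real \<times> (nat \<Rightarrow> real) \<Rightarrow> real)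
    \<Rightarrow> (nat \<Rightarrow> nat \<Rightarrow> real \<times> (nat \<Rightarrow> real) \<Rightarrow> real) \<Rightarrow> real" where
  "C2a_norm d \<alpha> T u ut ux uxx =
     holder_norm d \<alpha> (HTbar d T) u + holder_norm d \<alpha> (HTbar d T) ut +
     Max ((\<lambda>i. holder_norm d \<alpha> (HTbar d T) (ux i)) ` {1..d}) +
     Max ((\<lambda>(i, j). holder_norm d \<alpha> (HTbar d T) (\<lambda>P. snd P d * uxx i j P)) ` ({1..d} \<times> {1..d}))"

end

theory Submission
  imports Defs
begin

text \<open>
  Write \<open>N\<close> for the \<open>C\<^sup>2\<^sup>+\<^sup>\<alpha>\<^sub>s\<close> norm of \<open>u\<close> and \<open>M\<close> for \<open>sup |u|\<close>. At interior points the mean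
  value theorem, applied in \<open>t\<close> and in one spatial coordinate at a time, shows that \<open>u\<close> is
  Lipschitz with constant \<open>O(N)\<close> for the cycloidal distance: near points of height \<open>x\<^sub>d \<le> R\<close>
  that distance dominates \<open>|t\<^sub>1 - t\<^sub>2|\<close> and a multiple of the \<open>l\<^sup>1\<close> distance. Using the Lipschitz
  bound for close points and the bound \<open>2 M\<close> for distant ones gives, for every \<open>\<delta> \<le> 1\<close>,
  \<open>[u]\<^sub>\<alpha> \<le> C (\<delta> powr (1 - \<alpha>) N + \<delta> powr (- \<alpha>) M)\<close>. A difference quotient of width \<open>h\<close> and the
  Holder continuity of \<open>u\<^sub>x\<close> give \<open>|u\<^sub>x| \<le> 2 M / h + N h powr (\<alpha> / 2)\<close>; the same argument one
  order higher bounds \<open>x\<^sub>d u\<^sub>x\<^sub>x\<close> in terms of \<open>sup |u\<^sub>x|\<close>, and \<open>x\<^sub>d u\<^sub>x\<close> is Lipschitz like \<open>u\<close>, its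
  regularity in time coming from balancing a difference quotient against \<open>x\<^sub>d u\<^sub>x\<^sub>x\<close>. Choosing
  \<open>\<delta>\<close> and \<open>h\<close> as suitable powers of \<open>\<epsilon>\<close> gives the four estimates. Everything is proved at
  interior points, where the derivatives are classical, and carried to the boundary by Holder
  continuity.
\<close>

section \<open>Cycloidal distance\<close>

definition l1_dist :: "nat \<Rightarrow> (nat \<Rightarrow> real) \<Rightarrow> (nat \<Rightarrow> real) \<Rightarrow> real" where
  "l1_dist d x y = (\<Sum>i=1..d. \<bar>x i - y i\<bar>)"

definition cyc_denom :: "nat \<Rightarrow> (nat \<Rightarrow> real) \<Rightarrow> (nat \<Rightarrow> real) \<Rightarrow> real" where
  "cyc_denom d x y = sqrt (x d) + sqrt (y d) + sqrt (\<Sum>i=1..d-1. \<bar>x i - y i\<bar>)"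

lemma l1_dist_nonneg: "0 \<le> l1_dist d x y"
  unfolding l1_dist_def by (intro sum_nonneg) auto

lemma l1_dist_commute: "l1_dist d x y = l1_dist d y x"
  unfolding l1_dist_def by (simp add: abs_minus_commute)

lemma l1_dist_upd: "j \<in> {1..d} \<Longrightarrow> l1_dist d x (x(j := v)) = \<bar>x j - v\<bar>"
  unfolding l1_dist_def by (simp add: if_distrib sum.delta cong: if_cong)

lemma abs_le_l1_dist: "i \<in> {1..d} \<Longrightarrow> \<bar>x i - y i\<bar> \<le> l1_dist d x y"
  unfolding l1_dist_def by (intro member_le_sum) auto

lemma l1_dist_split_last:
  "1 \<le> d \<Longrightarrow> l1_dist d x y = (\<Sum>i=1..d-1. \<bar>x i - y i\<bar>) + \<bar>x d - y d\<bar>"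
  unfolding l1_dist_def by (cases d) (simp_all add: sum.cl_ivl_Suc)

lemma cyc_dist_eq:
  "cyc_dist d (t1, x) (t2, y) = l1_dist d x y / cyc_denom d x y + sqrt \<bar>t1 - t2\<bar>"
  unfolding cyc_dist_def l1_dist_def cyc_denom_def by simp

lemma cyc_dist_commute: "cyc_dist d P Q = cyc_dist d Q P"
  unfolding cyc_dist_def by (simp add: abs_minus_commute add.commute add.left_commute)

lemma cyc_dist_self [simp]: "cyc_dist d P P = 0"
  unfolding cyc_dist_def by simp

lemma cyc_denom_nonneg: "0 \<le> x d \<Longrightarrow> 0 \<le> y d \<Longrightarrow> 0 \<le> cyc_denom d x y"
  unfolding cyc_denom_def by (intro add_nonneg_nonneg) (auto intro: sum_nonneg)

lemma sqrt_l1_dist_le_cyc_denom: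
  assumes "1 \<le> d" "0 \<le> x d" "0 \<le> y d"
  shows "sqrt (l1_dist d x y) \<le> cyc_denom d x y"
proof -
  let ?S = "\<Sum>i=1..d-1. \<bar>x i - y i\<bar>"
  have "sqrt (l1_dist d x y) \<le> sqrt ?S + sqrt \<bar>x d - y d\<bar>"
    unfolding l1_dist_split_last[OF assms(1)] by (intro sqrt_add_le_add_sqrt) (auto intro: sum_nonneg)
  also have "sqrt \<bar>x d - y d\<bar> \<le> sqrt (x d + y d)"
    using assms by (intro real_sqrt_le_mono) linarith
  also have "\<dots> \<le> sqrt (x d) + sqrt (y d)"
    using assms by (intro sqrt_add_le_add_sqrt)
  finally show ?thesis unfolding cyc_denom_def by linarith
qed

lemma l1_dist_div_cyc_denom_le_sqrt:
  assumes "1 \<le> d" "0 \<le> x d" "0 \<le> y d"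
  shows "l1_dist d x y / cyc_denom d x y \<le> sqrt (l1_dist d x y)"
proof (cases "cyc_denom d x y = 0")
  case False
  with assms have pos: "0 < cyc_denom d x y" using cyc_denom_nonneg by fastforce
  have "l1_dist d x y = sqrt (l1_dist d x y) * sqrt (l1_dist d x y)"
    using l1_dist_nonneg by simp
  also have "\<dots> \<le> sqrt (l1_dist d x y) * cyc_denom d x y"
    using sqrt_l1_dist_le_cyc_denom[of d x y] assms l1_dist_nonneg by (intro mult_left_mono) auto
  finally show ?thesis using pos by (simp add: divide_le_eq)
qed (simp add: l1_dist_nonneg)

lemma l1_dist_div_cyc_denom_nonneg: "0 \<le> x d \<Longrightarrow> 0 \<le> y d \<Longrightarrow> 0 \<le> l1_dist d x y / cyc_denom d x y"
  using l1_dist_nonneg cyc_denom_nonneg by (intro divide_nonneg_nonneg)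

lemma cyc_dist_nonneg: "0 \<le> x d \<Longrightarrow> 0 \<le> y d \<Longrightarrow> 0 \<le> cyc_dist d (t1, x) (t2, y)"
  unfolding cyc_dist_eq using l1_dist_div_cyc_denom_nonneg by (simp add: add_nonneg_nonneg)

lemma cyc_dist_le_sqrt:
  "1 \<le> d \<Longrightarrow> 0 \<le> x d \<Longrightarrow> 0 \<le> y d \<Longrightarrow>
    cyc_dist d (t1, x) (t2, y) \<le> sqrt (l1_dist d x y) + sqrt \<bar>t1 - t2\<bar>"
  unfolding cyc_dist_eq using l1_dist_div_cyc_denom_le_sqrt by simp

lemma sqrt_time_le_cyc_dist:
  "0 \<le> x d \<Longrightarrow> 0 \<le> y d \<Longrightarrow> sqrt \<bar>t1 - t2\<bar> \<le> cyc_dist d (t1, x) (t2, y)"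
  unfolding cyc_dist_eq using l1_dist_div_cyc_denom_nonneg by simp

lemma time_le_cyc_dist:
  assumes "0 \<le> x d" "0 \<le> y d" "cyc_dist d (t1, x) (t2, y) \<le> 1"
  shows "\<bar>t1 - t2\<bar> \<le> cyc_dist d (t1, x) (t2, y)"
proof -
  have s: "sqrt \<bar>t1 - t2\<bar> \<le> 1" using sqrt_time_le_cyc_dist[of x d y t1 t2] assms by linarith
  have "\<bar>t1 - t2\<bar> = sqrt \<bar>t1 - t2\<bar> * sqrt \<bar>t1 - t2\<bar>" by simp
  also have "\<dots> \<le> sqrt \<bar>t1 - t2\<bar>" by (rule mult_left_le[OF s]) simp
  finally show ?thesis using sqrt_time_le_cyc_dist[of x d y t1 t2] assms by linarith
qed

text \<open>If \<open>S \<le> s (a + 2 \<surd>S)\<close> with \<open>s \<le> 1\<close>, absorbing \<open>2 s \<surd>S \<le> S/2 + 2 s\<^sup>2\<close> makes \<open>S\<close> linear in \<open>s\<close>.\<close>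
lemma le_linear_if_le_sqrt_self:
  fixes S s a :: real
  assumes "0 \<le> S" "0 \<le> s" "s \<le> 1" "0 \<le> a" "S \<le> s * (a + 2 * sqrt S)"
  shows "S \<le> (2 * a + 4) * s"
proof -
  define r where "r = sqrt S"
  have S: "S = r * r" unfolding r_def using assms(1) by simp
  have "S \<le> s * a + 2 * (s * r)" using assms(5) unfolding r_def[symmetric] by (simp add: algebra_simps)
  moreover have "2 * (s * r) \<le> r * r / 2 + 2 * (s * s)"
    using zero_le_square[of "r - 2 * s"] by (simp add: algebra_simps power2_eq_square)
  moreover have "s * s \<le> s" using assms(2,3) by (simp add: mult_left_le)
  ultimately have "S \<le> 2 * (s * a) + 4 * s" unfolding S by linarith
  then show ?thesis by (simp add: algebra_simps)
qed

lemma l1_dist_le_cyc_dist: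
  assumes "1 \<le> d" "0 \<le> x d" "0 \<le> y d" "x d \<le> R" "cyc_dist d (t1, x) (t2, y) \<le> 1"
  shows "l1_dist d x y \<le> (4 + 4 * sqrt R) * cyc_dist d (t1, x) (t2, y)"
proof -
  define S where "S = l1_dist d x y"
  define s where "s = S / cyc_denom d x y"
  have s_le: "s \<le> cyc_dist d (t1, x) (t2, y)"
    unfolding s_def S_def cyc_dist_eq by simp
  have s0: "0 \<le> s" unfolding s_def S_def using l1_dist_div_cyc_denom_nonneg assms(2,3) .
  have S0: "0 \<le> S" unfolding S_def by (rule l1_dist_nonneg)
  have S_eq: "S = s * cyc_denom d x y"
  proof (cases "cyc_denom d x y = 0")
    case True
    then show ?thesis using sqrt_l1_dist_le_cyc_denom[of d x y] assms S0 unfolding S_def by simp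
  qed (simp add: s_def)
  have "\<bar>x d - y d\<bar> \<le> S" unfolding S_def using abs_le_l1_dist[of d d x y] assms(1) by simp
  then have "sqrt (y d) \<le> sqrt (R + S)" using assms(4) by (intro real_sqrt_le_mono) linarith
  also have "\<dots> \<le> sqrt R + sqrt S" using assms S0 by (intro sqrt_add_le_add_sqrt) auto
  finally have y: "sqrt (y d) \<le> sqrt R + sqrt S" .
  have x: "sqrt (x d) \<le> sqrt R" using assms(4) by simp
  have "(\<Sum>i=1..d-1. \<bar>x i - y i\<bar>) \<le> S"
    unfolding S_def l1_dist_split_last[OF assms(1)] by simp
  then have "sqrt (\<Sum>i=1..d-1. \<bar>x i - y i\<bar>) \<le> sqrt S" by simp
  with x y have "cyc_denom d x y \<le> 2 * sqrt R + 2 * sqrt S" unfolding cyc_denom_def by linarith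
  then have "S \<le> s * (2 * sqrt R + 2 * sqrt S)"
    unfolding S_eq[symmetric] using s0 S_eq by (metis mult_left_mono)
  then have "S \<le> (2 * (2 * sqrt R) + 4) * s"
    using s_le assms(2,4,5) by (intro le_linear_if_le_sqrt_self[OF S0 s0]) auto
  also have "\<dots> = (4 + 4 * sqrt R) * s" by simp
  also have "\<dots> \<le> (4 + 4 * sqrt R) * cyc_dist d (t1, x) (t2, y)"
    using s_le assms(2,4) by (intro mult_left_mono) auto
  finally show ?thesis unfolding S_def .
qed

lemma HTbar_iff: "(t, x) \<in> HTbar d T \<longleftrightarrow> 0 \<le> t \<and> t \<le> T \<and> x \<in> Hbar d"
  unfolding HTbar_def by simp

lemma HTint_iff: "(t, x) \<in> HTint d T \<longleftrightarrow> 0 < t \<and> t < T \<and> x \<in> Hint d"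
  unfolding HTint_def by simp

lemma HTint_subset_HTbar: "HTint d T \<subseteq> HTbar d T"
  unfolding HTint_def HTbar_def Hint_def Hbar_def by auto

lemma Hint_upd: "x \<in> Hint d \<Longrightarrow> j \<in> {1..d} \<Longrightarrow> j \<noteq> d \<or> 0 < v \<Longrightarrow> x(j := v) \<in> Hint d"
  unfolding Hint_def by auto

lemma Hint_upd_ge: "x \<in> Hint d \<Longrightarrow> j \<in> {1..d} \<Longrightarrow> x j \<le> v \<Longrightarrow> x(j := v) \<in> Hint d"
  by (rule Hint_upd) (auto simp: Hint_def)

lemma cyc_dist_pos:
  assumes "1 \<le> d" "P \<in> HTbar d T" "Q \<in> HTbar d T" "P \<noteq> Q"
  shows "0 < cyc_dist d P Q"
proof -
  obtain t1 x where P: "P = (t1, x)" by (cases P)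
  obtain t2 y where Q: "Q = (t2, y)" by (cases Q)
  have x: "x \<in> Hbar d" and y: "y \<in> Hbar d" using assms(2,3) P Q by (auto simp: HTbar_iff)
  then have xy: "0 \<le> x d" "0 \<le> y d" by (auto simp: Hbar_def)
  show ?thesis
  proof (cases "t1 = t2")
    case True
    then obtain i where i: "x i \<noteq> y i" using assms(4) P Q by fastforce
    have "i \<in> {1..d}"
    proof (rule ccontr)
      assume "i \<notin> {1..d}"
      then show False using x y i unfolding Hbar_def by simp
    qed
    then have l1: "0 < l1_dist d x y" using abs_le_l1_dist[of i d x y] i by linarith
    then have "0 < cyc_denom d x y"
      using sqrt_l1_dist_le_cyc_denom[of d x y] assms(1) xy real_sqrt_gt_zero[OF l1] by linarith
    with l1 show ?thesis unfolding P Q cyc_dist_eq by (simp add: add_pos_nonneg)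
  next
    case False
    then show ?thesis
      using l1_dist_div_cyc_denom_nonneg[of x d y] xy unfolding P Q cyc_dist_eq by (simp add: add_nonneg_pos)
  qed
qed

lemma sup_norm_upper: "bdd_above ((\<lambda>P. \<bar>f P\<bar>) ` S) \<Longrightarrow> P \<in> S \<Longrightarrow> \<bar>f P\<bar> \<le> sup_norm S f"
  unfolding sup_norm_def by (rule cSup_upper) auto

lemma sup_norm_least: "S \<noteq> {} \<Longrightarrow> (\<And>P. P \<in> S \<Longrightarrow> \<bar>f P\<bar> \<le> B) \<Longrightarrow> sup_norm S f \<le> B"
  unfolding sup_norm_def by (rule cSup_least) auto

lemma HTbar_nonempty: "0 \<le> T \<Longrightarrow> HTbar d T \<noteq> {}"
  by (auto simp: HTbar_def Hbar_def)

lemma holder_quots_HTbar_nonempty: "0 < T \<Longrightarrow> holder_quots d \<alpha> (HTbar d T) f \<noteq> {}"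
proof -
  assume "0 < T"
  then have "(0, \<lambda>_. 0) \<in> HTbar d T" "(T, \<lambda>_. 0) \<in> HTbar d T" "(0::real, (\<lambda>_. 0) :: nat \<Rightarrow> real) \<noteq> (T, \<lambda>_. 0)"
    by (auto simp: HTbar_def Hbar_def)
  then show ?thesis unfolding holder_quots_def by blast
qed

lemma holder_semi_upper:
  assumes "1 \<le> d" "bdd_above (holder_quots d \<alpha> (HTbar d T) f)" "P \<in> HTbar d T" "Q \<in> HTbar d T"
  shows "\<bar>f P - f Q\<bar> \<le> holder_semi d \<alpha> (HTbar d T) f * cyc_dist d P Q powr \<alpha>"
proof (cases "P = Q")
  case False
  then have pos: "0 < cyc_dist d P Q" using cyc_dist_pos assms by blast
  have "\<bar>f P - f Q\<bar> / cyc_dist d P Q powr \<alpha> \<in> holder_quots d \<alpha> (HTbar d T) f"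
    unfolding holder_quots_def using assms False by blast
  then have "\<bar>f P - f Q\<bar> / cyc_dist d P Q powr \<alpha> \<le> holder_semi d \<alpha> (HTbar d T) f"
    unfolding holder_semi_def using assms(2) by (rule cSup_upper)
  then show ?thesis using pos by (simp add: divide_le_eq)
qed simp

lemma holder_semi_nonneg:
  assumes "0 < T" "bdd_above (holder_quots d \<alpha> (HTbar d T) f)"
  shows "0 \<le> holder_semi d \<alpha> (HTbar d T) f"
proof -
  obtain q where q: "q \<in> holder_quots d \<alpha> (HTbar d T) f"
    using holder_quots_HTbar_nonempty[OF assms(1)] by blast
  have "0 \<le> q" using q unfolding holder_quots_def by auto
  also have "q \<le> holder_semi d \<alpha> (HTbar d T) f"
    unfolding holder_semi_def using assms(2) q by (rule cSup_upper[rotated])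
  finally show ?thesis .
qed

lemma holder_semi_least:
  assumes "1 \<le> d" "0 < T"
    and "\<And>P Q. P \<in> HTbar d T \<Longrightarrow> Q \<in> HTbar d T \<Longrightarrow> \<bar>f P - f Q\<bar> \<le> A * cyc_dist d P Q powr \<alpha>"
  shows "holder_semi d \<alpha> (HTbar d T) f \<le> A"
  unfolding holder_semi_def
proof (rule cSup_least)
  show "holder_quots d \<alpha> (HTbar d T) f \<noteq> {}" using holder_quots_HTbar_nonempty[OF assms(2)] .
  fix q assume "q \<in> holder_quots d \<alpha> (HTbar d T) f"
  then obtain P Q where PQ: "q = \<bar>f P - f Q\<bar> / cyc_dist d P Q powr \<alpha>"
      "P \<in> HTbar d T" "Q \<in> HTbar d T" "P \<noteq> Q"
    unfolding holder_quots_def by blast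
  then have "0 < cyc_dist d P Q" using cyc_dist_pos assms(1) by blast
  then show "q \<le> A" using assms(3)[OF PQ(2,3)] PQ(1) by (simp add: divide_le_eq)
qed

lemma abs_diff_le_if_deriv_bounded:
  fixes f f' :: "real \<Rightarrow> real"
  assumes "\<And>z. z \<in> {min a b..max a b} \<Longrightarrow> (f has_real_derivative f' z) (at z)"
    and "\<And>z. z \<in> {min a b..max a b} \<Longrightarrow> \<bar>f' z\<bar> \<le> K"
  shows "\<bar>f b - f a\<bar> \<le> K * \<bar>b - a\<bar>"
  using field_differentiable_bound[of "{min a b..max a b}" f f' K b a] assms
  by (auto intro: has_field_derivative_at_within)

lemma coordinate_mvt:
  fixes f f' :: "(nat \<Rightarrow> real) \<Rightarrow> real"
  assumes "0 < h"
    and der: "\<And>w. x j \<le> w \<Longrightarrow> ((\<lambda>s. f (x(j := s))) has_real_derivative f' (x(j := w))) (at w)"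
  obtains z where "x j < z" "z < x j + h" "f (x(j := x j + h)) - f x = h * f' (x(j := z))"
proof -
  have "x j < x j + h" using assms(1) by simp
  from MVT2[OF this, of "\<lambda>s. f (x(j := s))" "\<lambda>s. f' (x(j := s))"] der
  obtain z where "x j < z" "z < x j + h" "f (x(j := x j + h)) - f (x(j := x j)) = (x j + h - x j) * f' (x(j := z))"
    by fastforce
  then show thesis using that by simp
qed

lemma le_holder_if_lipschitz_and_bounded:
  fixes D s K G \<delta> \<alpha> :: real
  assumes "0 \<le> s" "0 \<le> K" "0 \<le> G" "D \<le> 2 * G" "s \<le> 1 \<Longrightarrow> D \<le> K * s"
    and "0 < \<delta>" "\<delta> \<le> 1" "0 < \<alpha>" "\<alpha> < 1"
  shows "D \<le> (K * \<delta> powr (1 - \<alpha>) + 2 * G * \<delta> powr (- \<alpha>)) * s powr \<alpha>"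
proof (cases "s \<le> \<delta>")
  case True
  have "D \<le> K * (s powr (1 - \<alpha>) * s powr \<alpha>)"
    using assms True by (simp add: powr_add[symmetric])
  also have "\<dots> \<le> K * (\<delta> powr (1 - \<alpha>) * s powr \<alpha>)"
    using assms True by (intro mult_left_mono mult_right_mono powr_mono2) auto
  also have "\<dots> \<le> K * (\<delta> powr (1 - \<alpha>) * s powr \<alpha>) + 2 * G * \<delta> powr (- \<alpha>) * s powr \<alpha>"
    using assms(3) by simp
  finally show ?thesis by (simp add: algebra_simps)
next
  case False
  then have "1 \<le> (s / \<delta>) powr \<alpha>" using assms by (intro ge_one_powr_ge_zero) auto
  also have "(s / \<delta>) powr \<alpha> = \<delta> powr (- \<alpha>) * s powr \<alpha>"
    using assms by (simp add: powr_divide powr_minus field_simps)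
  finally have "1 \<le> \<delta> powr (- \<alpha>) * s powr \<alpha>" .
  then have "2 * G \<le> 2 * G * (\<delta> powr (- \<alpha>) * s powr \<alpha>)"
    using assms(3) by (simp add: mult_le_cancel_left1)
  also have "\<dots> \<le> K * (\<delta> powr (1 - \<alpha>) * s powr \<alpha>) + 2 * G * (\<delta> powr (- \<alpha>) * s powr \<alpha>)"
    using assms(2) by simp
  finally show ?thesis using assms(4) by (simp add: algebra_simps)
qed

text \<open>The choice \<open>\<delta> = (\<epsilon> / A) powr (1 / p)\<close> turns the first term into \<open>\<epsilon> N\<close>.\<close>
lemma le_eps_if_le_powr_family:
  fixes X A B N M p q \<epsilon> :: real
  assumes "1 \<le> A" "0 < p" "0 < \<epsilon>" "\<epsilon> \<le> 1"
    and bound: "\<And>\<delta>. 0 < \<delta> \<Longrightarrow> \<delta> \<le> 1 \<Longrightarrow> X \<le> A * \<delta> powr p * N + B * \<delta> powr (- q) * M"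
  shows "X \<le> \<epsilon> * N + B * A powr (q / p) * \<epsilon> powr (- (q / p)) * M"
proof -
  define r where "r = \<epsilon> / A"
  have r: "0 < r" "r \<le> 1" unfolding r_def using assms by (auto simp: field_simps)
  define \<delta> where "\<delta> = r powr (1 / p)"
  have \<delta>: "0 < \<delta>" "\<delta> \<le> 1" unfolding \<delta>_def using r assms(2) by (auto intro: powr_le1)
  have "\<delta> powr p = r" unfolding \<delta>_def using r assms(2) by (simp add: powr_powr)
  then have "A * \<delta> powr p = \<epsilon>" unfolding r_def using assms(1) by simp
  moreover have "\<delta> powr (- q) = r powr (- (q / p))"
    unfolding \<delta>_def by (simp add: powr_powr)
  moreover have "r powr (- (q / p)) = \<epsilon> powr (- (q / p)) / A powr (- (q / p))"
    unfolding r_def using assms by (simp add: powr_divide)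
  moreover have "\<dots> = A powr (q / p) * \<epsilon> powr (- (q / p))"
    by (simp add: powr_minus field_simps)
  ultimately show ?thesis using bound[OF \<delta>] by (simp add: mult.assoc)
qed

lemma le_eps_powr_mono:
  fixes X N M c C q m \<epsilon> :: real
  assumes "X \<le> \<epsilon> * N + c * \<epsilon> powr (- q) * M" "c \<le> C" "q \<le> m"
    and "0 < \<epsilon>" "\<epsilon> < 1" "0 \<le> c" "0 \<le> M"
  shows "X \<le> \<epsilon> * N + C * \<epsilon> powr (- m) * M"
proof -
  have "\<epsilon> powr (- q) \<le> \<epsilon> powr (- m)" using assms by (intro powr_mono') auto
  then have "c * \<epsilon> powr (- q) * M \<le> C * \<epsilon> powr (- m) * M"
    using assms by (intro mult_right_mono mult_mono) auto
  then show ?thesis using assms(1) by linarith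
qed

lemma one_le_powr_neg: "0 < (\<delta>::real) \<Longrightarrow> \<delta> \<le> 1 \<Longrightarrow> 0 \<le> q \<Longrightarrow> 1 \<le> \<delta> powr (- q)"
  using powr_mono'[of "- q" 0 \<delta>] by simp

section \<open>Partial derivatives in the open half space\<close>

text \<open>Walk from \<open>x\<close> to \<open>y\<close> changing one coordinate at a time; every intermediate point stays in
  the open half space.\<close>
lemma abs_diff_le_l1_dist_if_partials_bounded:
  fixes \<phi> :: "(nat \<Rightarrow> real) \<Rightarrow> real" and D :: "nat \<Rightarrow> (nat \<Rightarrow> real) \<Rightarrow> real"
  assumes x: "x \<in> Hint d" and y: "y \<in> Hint d"
    and der: "\<And>z j. z \<in> Hint d \<Longrightarrow> j \<in> {1..d} \<Longrightarrow> ((\<lambda>s. \<phi> (z(j := s))) has_real_derivative D j z) (at (z j))"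
    and bound: "\<And>z j. z \<in> Hint d \<Longrightarrow> j \<in> {1..d} \<Longrightarrow> \<bar>D j z\<bar> \<le> K"
  shows "\<bar>\<phi> y - \<phi> x\<bar> \<le> K * l1_dist d x y"
proof -
  define z where "z k = (\<lambda>i. if 1 \<le> i \<and> i \<le> k then y i else x i)" for k
  have z_Hint: "z k \<in> Hint d" for k
    using x y unfolding z_def Hint_def by auto
  have step: "\<bar>\<phi> (z (Suc k)) - \<phi> (z k)\<bar> \<le> K * \<bar>x (Suc k) - y (Suc k)\<bar>" if k: "Suc k \<le> d" for k
  proof -
    let ?j = "Suc k"
    have j: "?j \<in> {1..d}" using k by simp
    have "\<bar>\<phi> ((z k)(?j := y ?j)) - \<phi> ((z k)(?j := x ?j))\<bar> \<le> K * \<bar>y ?j - x ?j\<bar>"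
    proof (rule abs_diff_le_if_deriv_bounded)
      fix w assume "w \<in> {min (x ?j) (y ?j)..max (x ?j) (y ?j)}"
      then have w: "(z k)(?j := w) \<in> Hint d"
        using x y j z_Hint[of k] by (intro Hint_upd) (auto simp: Hint_def)
      show "((\<lambda>s. \<phi> ((z k)(?j := s))) has_real_derivative D ?j ((z k)(?j := w))) (at w)"
        using der[OF w j] by simp
      show "\<bar>D ?j ((z k)(?j := w))\<bar> \<le> K" using bound[OF w j] .
    qed
    moreover have "z (Suc k) = (z k)(?j := y ?j)" "z k = (z k)(?j := x ?j)"
      unfolding z_def by (auto simp: fun_eq_iff)
    ultimately show ?thesis by (metis abs_minus_commute)
  qed
  have "\<bar>\<phi> (z k) - \<phi> x\<bar> \<le> K * (\<Sum>i=1..k. \<bar>x i - y i\<bar>)" if "k \<le> d" for k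
    using that
  proof (induction k)
    case 0
    have "z 0 = x" unfolding z_def by auto
    then show ?case by simp
  next
    case (Suc k)
    have "\<bar>\<phi> (z (Suc k)) - \<phi> x\<bar> \<le> \<bar>\<phi> (z (Suc k)) - \<phi> (z k)\<bar> + \<bar>\<phi> (z k) - \<phi> x\<bar>" by linarith
    also have "\<dots> \<le> K * \<bar>x (Suc k) - y (Suc k)\<bar> + K * (\<Sum>i=1..k. \<bar>x i - y i\<bar>)"
      using step Suc by (intro add_mono) auto
    finally show ?case by (simp add: algebra_simps)
  qed
  moreover have "z d = y" using x y unfolding z_def Hint_def by (auto simp: fun_eq_iff)
  ultimately show ?thesis unfolding l1_dist_def by fastforce
qed

lemma partial_deriv_eq_0_if_vanishing_above:
  assumes P: "(t, x) \<in> HTint d T" and i: "i \<in> {1..d}" and "0 \<le> R" "R < x d"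
    and der: "((\<lambda>s. f (t, x(i := s))) has_real_derivative D) (at (x i))"
    and vanish: "\<And>y. (t, y) \<in> HTint d T \<Longrightarrow> R < y d \<Longrightarrow> f (t, y) = 0"
  shows "D = 0"
proof -
  define \<delta> where "\<delta> = (if i = d then x d - R else 1)"
  have "0 < \<delta>" unfolding \<delta>_def using assms by auto
  then show ?thesis
  proof (rule DERIV_local_const[OF der], intro allI impI)
    fix s assume s: "\<bar>x i - s\<bar> < \<delta>"
    then have above: "R < (x(i := s)) d" unfolding \<delta>_def using assms by (cases "i = d") auto
    then have "(t, x(i := s)) \<in> HTint d T"
      using P i assms(3) by (auto simp: HTint_iff intro!: Hint_upd)
    then show "f (t, x(i := x i)) = f (t, x(i := s))"
      using vanish[OF P assms(4)] vanish above by simp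
  qed
qed

lemma cyc_dist_upd_powr_le:
  assumes "1 \<le> d" "0 \<le> x d" "0 \<le> (x(j := z)) d" "j \<in> {1..d}" "\<bar>x j - z\<bar> \<le> h" "0 < \<alpha>"
  shows "cyc_dist d (t, x) (t, x(j := z)) powr \<alpha> \<le> h powr (\<alpha> / 2)"
proof -
  have "cyc_dist d (t, x) (t, x(j := z)) \<le> sqrt \<bar>x j - z\<bar>"
    using cyc_dist_le_sqrt[of d x "x(j := z)" t t] l1_dist_upd[OF assms(4)] assms(1-3) by simp
  also have "\<dots> \<le> sqrt h" using assms(5) by simp
  finally have "cyc_dist d (t, x) (t, x(j := z)) powr \<alpha> \<le> sqrt h powr \<alpha>"
    using assms cyc_dist_nonneg[of x d "x(j := z)" t t] by (intro powr_mono2) auto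
  also have "sqrt h powr \<alpha> = h powr (\<alpha> / 2)"
    using assms(5) by (simp add: powr_half_sqrt[symmetric] powr_powr)
  finally show ?thesis .
qed

section \<open>Approximation from the open layer\<close>

text \<open>Pushes a point of the closed layer into the open one: time is contracted towards \<open>T/2\<close>
  and \<open>x\<^sub>d\<close> is lifted, both by the amount \<open>e\<close>. Neither operation increases cycloidal distances.\<close>
definition interior_shift :: "real \<Rightarrow> nat \<Rightarrow> real \<Rightarrow> real \<times> (nat \<Rightarrow> real) \<Rightarrow> real \<times> (nat \<Rightarrow> real)" where
  "interior_shift T d e P = ((1 - e) * fst P + e * T / 2, (snd P)(d := snd P d + e))"

lemma interior_shift_mem:
  assumes "0 < T" "1 \<le> d" "0 < e" "e \<le> 1" "P \<in> HTbar d T"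
  shows "interior_shift T d e P \<in> HTint d T"
proof -
  obtain t x where P: "P = (t, x)" by (cases P)
  have t: "0 \<le> t" "t \<le> T" and x: "x \<in> Hbar d" using assms(5) P by (auto simp: HTbar_iff)
  have "(1 - e) * t \<le> (1 - e) * T" using t assms by (intro mult_left_mono) auto
  moreover have "0 \<le> (1 - e) * t" using t assms by simp
  moreover have "0 < e * T" using assms by simp
  ultimately have "0 < (1 - e) * t + e * T / 2" "(1 - e) * t + e * T / 2 < T"
    by (simp_all add: algebra_simps)
  with x assms(2,3) show ?thesis unfolding P interior_shift_def
    by (auto simp: HTint_iff Hint_def Hbar_def)
qed

lemma l1_dist_div_cyc_denom_lift_le:
  assumes "1 \<le> d" "0 \<le> e" "0 \<le> x d" "0 \<le> y d"
  shows "l1_dist d (x(d := x d + e)) (y(d := y d + e)) / cyc_denom d (x(d := x d + e)) (y(d := y d + e))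
    \<le> l1_dist d x y / cyc_denom d x y"
proof -
  let ?x = "x(d := x d + e)" and ?y = "y(d := y d + e)"
  have l1: "l1_dist d ?x ?y = l1_dist d x y" unfolding l1_dist_def by (intro sum.cong) auto
  show ?thesis
  proof (cases "cyc_denom d x y = 0")
    case True
    then have "l1_dist d x y = 0"
      using sqrt_l1_dist_le_cyc_denom[of d x y] assms l1_dist_nonneg[of d x y] by simp
    then show ?thesis using l1 by simp
  next
    case False
    then have "0 < cyc_denom d x y" using cyc_denom_nonneg[of x d y] assms by simp
    moreover have "(\<Sum>i=1..d-1. \<bar>?x i - ?y i\<bar>) = (\<Sum>i=1..d-1. \<bar>x i - y i\<bar>)"
      using assms(1) by (intro sum.cong) auto
    then have "cyc_denom d x y \<le> cyc_denom d ?x ?y"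
      unfolding cyc_denom_def using assms by (simp add: add_mono)
    ultimately show ?thesis unfolding l1 using l1_dist_nonneg by (intro divide_left_mono) auto
  qed
qed

lemma cyc_dist_interior_shift_le:
  assumes "1 \<le> d" "0 < e" "e \<le> 1" "P \<in> HTbar d T" "Q \<in> HTbar d T"
  shows "cyc_dist d (interior_shift T d e P) (interior_shift T d e Q) \<le> cyc_dist d P Q"
proof -
  obtain t1 x t2 y where P: "P = (t1, x)" and Q: "Q = (t2, y)" by fastforce
  have xy: "0 \<le> x d" "0 \<le> y d" using assms(4,5) P Q by (auto simp: HTbar_iff Hbar_def)
  have "\<bar>((1 - e) * t1 + e * T / 2) - ((1 - e) * t2 + e * T / 2)\<bar> = (1 - e) * \<bar>t1 - t2\<bar>"
    using assms(3) by (simp add: abs_mult flip: right_diff_distrib)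
  also have "\<dots> \<le> \<bar>t1 - t2\<bar>" using assms(2,3) by (intro mult_left_le_one_le) auto
  finally have "sqrt \<bar>((1 - e) * t1 + e * T / 2) - ((1 - e) * t2 + e * T / 2)\<bar> \<le> sqrt \<bar>t1 - t2\<bar>"
    by simp
  with l1_dist_div_cyc_denom_lift_le[of d e x y] assms(1,2) xy show ?thesis
    unfolding P Q interior_shift_def cyc_dist_eq fst_conv snd_conv by linarith
qed

lemma cyc_dist_interior_shift_self_le:
  assumes "1 \<le> d" "0 < e" "e \<le> 1" "P \<in> HTbar d T"
  shows "cyc_dist d P (interior_shift T d e P) \<le> sqrt e + sqrt (e * T)"
proof -
  obtain t x where P: "P = (t, x)" by (cases P)
  have t: "0 \<le> t" "t \<le> T" and x: "0 \<le> x d" using assms(4) P by (auto simp: HTbar_iff Hbar_def)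
  have "t - ((1 - e) * t + e * T / 2) = e * (t - T / 2)" by (simp add: algebra_simps)
  then have "\<bar>t - ((1 - e) * t + e * T / 2)\<bar> = e * \<bar>t - T / 2\<bar>"
    using assms(2) by (simp add: abs_mult)
  also have "\<dots> \<le> e * T" using t assms(2) by (intro mult_left_mono) auto
  finally have "sqrt \<bar>t - ((1 - e) * t + e * T / 2)\<bar> \<le> sqrt (e * T)" by simp
  moreover have "cyc_dist d (t, x) ((1 - e) * t + e * T / 2, x(d := x d + e))
      \<le> sqrt e + sqrt \<bar>t - ((1 - e) * t + e * T / 2)\<bar>"
    using cyc_dist_le_sqrt[of d x "x(d := x d + e)" t] l1_dist_upd[of d d x] assms x by simp
  ultimately show ?thesis unfolding P interior_shift_def fst_conv snd_conv by linarith
qed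

abbreviation shift_seq :: "nat \<Rightarrow> real" where
  "shift_seq n \<equiv> inverse (real (Suc n))"

lemma shift_seq_bounds: "0 < shift_seq n" "shift_seq n \<le> 1"
  by (simp_all add: inverse_le_1_iff)

lemma tendsto_interior_shift_if_holder:
  fixes f :: "real \<times> (nat \<Rightarrow> real) \<Rightarrow> real"
  assumes "0 < T" "1 \<le> d" "0 < \<alpha>" "P \<in> HTbar d T"
    and holder: "\<And>P Q. P \<in> HTbar d T \<Longrightarrow> Q \<in> HTbar d T \<Longrightarrow> \<bar>f P - f Q\<bar> \<le> A * cyc_dist d P Q powr \<alpha>"
  shows "(\<lambda>n. f (interior_shift T d (shift_seq n) P)) \<longlonglongrightarrow> f P"
proof -
  let ?Q = "\<lambda>n. interior_shift T d (shift_seq n) P"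
  have mem: "?Q n \<in> HTbar d T" for n
    using interior_shift_mem[OF assms(1,2) shift_seq_bounds assms(4)] HTint_subset_HTbar by blast
  have nonneg: "0 \<le> cyc_dist d P (?Q n)" for n
  proof (cases "P = ?Q n")
    case False
    then show ?thesis using cyc_dist_pos[OF assms(2,4) mem[of n] False] by simp
  qed simp
  have "(\<lambda>n. sqrt (shift_seq n) + sqrt (shift_seq n * T)) \<longlonglongrightarrow> sqrt 0 + sqrt (0 * T)"
    by (intro tendsto_intros LIMSEQ_inverse_real_of_nat)
  then have "(\<lambda>n. sqrt (shift_seq n) + sqrt (shift_seq n * T)) \<longlonglongrightarrow> 0" by simp
  then have "(\<lambda>n. cyc_dist d P (?Q n)) \<longlonglongrightarrow> 0"
    by (rule Lim_null_comparison[rotated])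
      (use nonneg cyc_dist_interior_shift_self_le[OF assms(2) shift_seq_bounds assms(4)] in
        \<open>auto intro!: always_eventually\<close>)
  then have "(\<lambda>n. \<bar>A\<bar> * cyc_dist d P (?Q n) powr \<alpha>) \<longlonglongrightarrow> 0"
    using assms(3) nonneg by (intro tendsto_mult_right_zero tendsto_zero_powrI always_eventually) auto
  then have "(\<lambda>n. f (?Q n) - f P) \<longlonglongrightarrow> 0"
  proof (rule Lim_null_comparison[rotated], intro always_eventually allI)
    fix n
    have "\<bar>f P - f (?Q n)\<bar> \<le> \<bar>A\<bar> * cyc_dist d P (?Q n) powr \<alpha>"
      using holder[OF assms(4) mem] by (smt (verit) mult_right_mono powr_ge_zero)
    then show "norm (f (?Q n) - f P) \<le> \<bar>A\<bar> * cyc_dist d P (?Q n) powr \<alpha>"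
      by (simp add: abs_minus_commute)
  qed
  then show ?thesis by (simp add: LIM_zero_iff)
qed

lemma abs_le_if_interior_abs_le:
  fixes f :: "real \<times> (nat \<Rightarrow> real) \<Rightarrow> real"
  assumes "0 < T" "1 \<le> d" "P \<in> HTbar d T"
    and lim: "(\<lambda>n. f (interior_shift T d (shift_seq n) P)) \<longlonglongrightarrow> f P"
    and bound: "\<And>Q. Q \<in> HTint d T \<Longrightarrow> \<bar>f Q\<bar> \<le> B"
  shows "\<bar>f P\<bar> \<le> B"
  using LIMSEQ_le_const2[OF tendsto_rabs[OF lim]] bound interior_shift_mem[OF assms(1,2) shift_seq_bounds assms(3)]
  by blast

lemma holder_if_interior_holder:
  fixes f :: "real \<times> (nat \<Rightarrow> real) \<Rightarrow> real"
  assumes "0 < T" "1 \<le> d" "0 < \<alpha>" "0 \<le> A" "P \<in> HTbar d T" "Q \<in> HTbar d T"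
    and lim: "(\<lambda>n. f (interior_shift T d (shift_seq n) P)) \<longlonglongrightarrow> f P"
      "(\<lambda>n. f (interior_shift T d (shift_seq n) Q)) \<longlonglongrightarrow> f Q"
    and holder: "\<And>P Q. P \<in> HTint d T \<Longrightarrow> Q \<in> HTint d T \<Longrightarrow> \<bar>f P - f Q\<bar> \<le> A * cyc_dist d P Q powr \<alpha>"
  shows "\<bar>f P - f Q\<bar> \<le> A * cyc_dist d P Q powr \<alpha>"
proof -
  let ?P = "\<lambda>n. interior_shift T d (shift_seq n) P" and ?Q = "\<lambda>n. interior_shift T d (shift_seq n) Q"
  have "\<bar>f (?P n) - f (?Q n)\<bar> \<le> A * cyc_dist d P Q powr \<alpha>" for n
  proof -
    have mem: "?P n \<in> HTint d T" "?Q n \<in> HTint d T"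
      using interior_shift_mem[OF assms(1,2) shift_seq_bounds] assms(5,6) by auto
    then have "0 \<le> cyc_dist d (?P n) (?Q n)"
      by (cases "?P n", cases "?Q n") (auto simp: HTint_iff Hint_def intro: cyc_dist_nonneg)
    then have "cyc_dist d (?P n) (?Q n) powr \<alpha> \<le> cyc_dist d P Q powr \<alpha>"
      using cyc_dist_interior_shift_le[OF assms(2) shift_seq_bounds assms(5,6)] assms(3)
      by (intro powr_mono2) auto
    then show ?thesis using holder[OF mem] assms(4) by (meson mult_left_mono order_trans)
  qed
  then show ?thesis using LIMSEQ_le_const2[OF tendsto_rabs[OF tendsto_diff[OF lim]]] by blast
qed

section \<open>Estimates for a \<open>C\<^sup>2\<^sup>+\<^sup>\<alpha>\<^sub>s\<close> function supported in a strip\<close>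

definition interpolation_exponent :: "real \<Rightarrow> real" where
  "interpolation_exponent \<alpha> = \<alpha> / (1 - \<alpha>) + 2 / \<alpha> + (2 / \<alpha> + \<alpha>) / (1 - \<alpha>) + (2 / \<alpha> + 2) / (\<alpha> / 2)"

definition interpolation_constant :: "real \<Rightarrow> real \<Rightarrow> real" where
  "interpolation_constant R \<alpha> =
     3 * (5 + 4 * sqrt R) powr (\<alpha> / (1 - \<alpha>)) + 2
     + 6 * R * (3 * (R + 1)) powr (2 / \<alpha>) * (9 + 12 * sqrt R) powr ((2 / \<alpha> + \<alpha>) / (1 - \<alpha>))
     + 4 * (R + 1) * (2 * (R + 1)) powr (2 / \<alpha>) * 2 powr ((2 / \<alpha> + 2) / (\<alpha> / 2))"

lemma interpolation_exponent_ge: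
  assumes "0 < \<alpha>" "\<alpha> < 1"
  shows "\<alpha> / (1 - \<alpha>) \<le> interpolation_exponent \<alpha>" "2 / \<alpha> \<le> interpolation_exponent \<alpha>"
    "(2 / \<alpha> + \<alpha>) / (1 - \<alpha>) \<le> interpolation_exponent \<alpha>" "(2 / \<alpha> + 2) / (\<alpha> / 2) \<le> interpolation_exponent \<alpha>"
    "0 < interpolation_exponent \<alpha>"
proof -
  have "0 < \<alpha> / (1 - \<alpha>)" "0 < 2 / \<alpha>" "0 < (2 / \<alpha> + \<alpha>) / (1 - \<alpha>)" "0 < (2 / \<alpha> + 2) / (\<alpha> / 2)"
    using assms by (auto intro!: divide_pos_pos add_pos_pos)
  then show "\<alpha> / (1 - \<alpha>) \<le> interpolation_exponent \<alpha>" "2 / \<alpha> \<le> interpolation_exponent \<alpha>"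
    "(2 / \<alpha> + \<alpha>) / (1 - \<alpha>) \<le> interpolation_exponent \<alpha>" "(2 / \<alpha> + 2) / (\<alpha> / 2) \<le> interpolation_exponent \<alpha>"
    "0 < interpolation_exponent \<alpha>"
    unfolding interpolation_exponent_def by linarith+
qed

lemma interpolation_constant_ge:
  assumes "0 < R"
  shows "3 * (5 + 4 * sqrt R) powr (\<alpha> / (1 - \<alpha>)) \<le> interpolation_constant R \<alpha>" "2 \<le> interpolation_constant R \<alpha>"
    "6 * R * (3 * (R + 1)) powr (2 / \<alpha>) * (9 + 12 * sqrt R) powr ((2 / \<alpha> + \<alpha>) / (1 - \<alpha>)) \<le> interpolation_constant R \<alpha>"
    "4 * (R + 1) * (2 * (R + 1)) powr (2 / \<alpha>) * 2 powr ((2 / \<alpha> + 2) / (\<alpha> / 2)) \<le> interpolation_constant R \<alpha>"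
    "0 < interpolation_constant R \<alpha>"
proof -
  have "0 \<le> 3 * (5 + 4 * sqrt R) powr (\<alpha> / (1 - \<alpha>))"
    "0 \<le> 6 * R * (3 * (R + 1)) powr (2 / \<alpha>) * (9 + 12 * sqrt R) powr ((2 / \<alpha> + \<alpha>) / (1 - \<alpha>))"
    "0 \<le> 4 * (R + 1) * (2 * (R + 1)) powr (2 / \<alpha>) * 2 powr ((2 / \<alpha> + 2) / (\<alpha> / 2))"
    using assms by simp_all
  then show "3 * (5 + 4 * sqrt R) powr (\<alpha> / (1 - \<alpha>)) \<le> interpolation_constant R \<alpha>" "2 \<le> interpolation_constant R \<alpha>"
    "6 * R * (3 * (R + 1)) powr (2 / \<alpha>) * (9 + 12 * sqrt R) powr ((2 / \<alpha> + \<alpha>) / (1 - \<alpha>)) \<le> interpolation_constant R \<alpha>"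
    "4 * (R + 1) * (2 * (R + 1)) powr (2 / \<alpha>) * 2 powr ((2 / \<alpha> + 2) / (\<alpha> / 2)) \<le> interpolation_constant R \<alpha>"
    "0 < interpolation_constant R \<alpha>"
    unfolding interpolation_constant_def by linarith+
qed

locale C2a_supported_in_strip =
  fixes d :: nat and \<alpha> T R :: real
    and u ut :: "real \<times> (nat \<Rightarrow> real) \<Rightarrow> real"
    and ux :: "nat \<Rightarrow> real \<times> (nat \<Rightarrow> real) \<Rightarrow> real"
    and uxx :: "nat \<Rightarrow> nat \<Rightarrow> real \<times> (nat \<Rightarrow> real) \<Rightarrow> real"
  assumes d: "1 \<le> d" and \<alpha>: "0 < \<alpha>" "\<alpha> < 1" and T: "0 < T" and R: "0 < R"
    and C2a: "in_C2a d \<alpha> T u ut ux uxx"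
    and support: "\<And>t x. (t, x) \<in> HTbar d T \<Longrightarrow> R < x d \<Longrightarrow> u (t, x) = 0"
begin

abbreviation "H \<equiv> HTbar d T"
abbreviation "I \<equiv> HTint d T"
abbreviation "cd \<equiv> cyc_dist d"
abbreviation "xd_ux i \<equiv> \<lambda>P. snd P d * ux i P"
abbreviation "xd_uxx i j \<equiv> \<lambda>P. snd P d * uxx i j P"

definition N :: real where "N = C2a_norm d \<alpha> T u ut ux uxx"
definition M :: real where "M = sup_norm H u"

lemma I_subset_H: "P \<in> I \<Longrightarrow> P \<in> H"
  using HTint_subset_HTbar by blast

lemma upd_mem_I: "(t, x) \<in> I \<Longrightarrow> j \<in> {1..d} \<Longrightarrow> x j \<le> w \<Longrightarrow> (t, x(j := w)) \<in> I"
  by (simp add: HTint_iff Hint_upd_ge)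

lemma I_time_mem: "(t1, x) \<in> I \<Longrightarrow> (t2, y) \<in> I \<Longrightarrow> (t2, x) \<in> I"
  by (simp add: HTint_iff)

lemma xd_pos: "(t, x) \<in> I \<Longrightarrow> 0 < x d"
  by (simp add: HTint_iff Hint_def)

lemma xd_nonneg: "(t, x) \<in> H \<Longrightarrow> 0 \<le> x d"
  by (simp add: HTbar_iff Hbar_def)

lemma cd_nonneg: "P \<in> H \<Longrightarrow> Q \<in> H \<Longrightarrow> 0 \<le> cd P Q"
  by (cases P, cases Q) (auto intro: cyc_dist_nonneg simp: HTbar_iff Hbar_def)

lemma in_Calpha_u: "in_Calpha d \<alpha> H u"
  and in_Calpha_ut: "in_Calpha d \<alpha> H ut"
  and in_Calpha_ux: "i \<in> {1..d} \<Longrightarrow> in_Calpha d \<alpha> H (ux i)"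
  and in_Calpha_xd_uxx: "i \<in> {1..d} \<Longrightarrow> j \<in> {1..d} \<Longrightarrow> in_Calpha d \<alpha> H (xd_uxx i j)"
  using C2a unfolding in_C2a_def by auto

lemma origin_mem_H: "(0, \<lambda>_. 0) \<in> H"
  using T by (simp add: HTbar_def Hbar_def)

lemma sup_norm_nonneg: "in_Calpha d \<alpha> H f \<Longrightarrow> 0 \<le> sup_norm H f"
  using sup_norm_upper[OF _ origin_mem_H, of f] unfolding in_Calpha_def by (meson abs_ge_zero order_trans)

lemma holder_norm_nonneg: "in_Calpha d \<alpha> H f \<Longrightarrow> 0 \<le> holder_norm d \<alpha> H f"
  unfolding holder_norm_def using sup_norm_nonneg holder_semi_nonneg[OF T]
  by (simp add: in_Calpha_def)

lemma holder_norms_le_N: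
  shows "holder_norm d \<alpha> H u \<le> N" "holder_norm d \<alpha> H ut \<le> N"
    and "i \<in> {1..d} \<Longrightarrow> holder_norm d \<alpha> H (ux i) \<le> N"
    and "i \<in> {1..d} \<Longrightarrow> j \<in> {1..d} \<Longrightarrow> holder_norm d \<alpha> H (xd_uxx i j) \<le> N"
proof -
  let ?A = "holder_norm d \<alpha> H u" and ?B = "holder_norm d \<alpha> H ut"
  let ?C = "Max ((\<lambda>i. holder_norm d \<alpha> H (ux i)) ` {1..d})"
  let ?D = "Max ((\<lambda>(i, j). holder_norm d \<alpha> H (xd_uxx i j)) ` ({1..d} \<times> {1..d}))"
  have N: "N = ?A + ?B + ?C + ?D" unfolding N_def C2a_norm_def ..
  have C: "holder_norm d \<alpha> H (ux i) \<le> ?C" if "i \<in> {1..d}" for i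
    using that by (intro Max_ge) auto
  have D: "holder_norm d \<alpha> H (xd_uxx i j) \<le> ?D" if "i \<in> {1..d}" "j \<in> {1..d}" for i j
  proof (rule Max_ge)
    show "holder_norm d \<alpha> H (xd_uxx i j) \<in> (\<lambda>(i, j). holder_norm d \<alpha> H (xd_uxx i j)) ` ({1..d} \<times> {1..d})"
      using that by force
  qed simp
  have one: "1 \<in> {1..d}" using d by simp
  have nonneg: "0 \<le> ?A" "0 \<le> ?B" "0 \<le> ?C" "0 \<le> ?D"
    using holder_norm_nonneg[OF in_Calpha_u] holder_norm_nonneg[OF in_Calpha_ut]
      holder_norm_nonneg[OF in_Calpha_ux[OF one]] C[OF one]
      holder_norm_nonneg[OF in_Calpha_xd_uxx[OF one one]] D[OF one one]
    by linarith+
  show "?A \<le> N" "?B \<le> N" using N nonneg by linarith+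
  show "holder_norm d \<alpha> H (ux i) \<le> N" if "i \<in> {1..d}" for i
    using C[OF that] N nonneg by linarith
  show "holder_norm d \<alpha> H (xd_uxx i j) \<le> N" if "i \<in> {1..d}" "j \<in> {1..d}" for i j
    using D[OF that] N nonneg by linarith
qed

lemma bounds_by_N:
  assumes "in_Calpha d \<alpha> H f" "holder_norm d \<alpha> H f \<le> N"
  shows "P \<in> H \<Longrightarrow> \<bar>f P\<bar> \<le> N"
    and "P \<in> H \<Longrightarrow> Q \<in> H \<Longrightarrow> \<bar>f P - f Q\<bar> \<le> N * cd P Q powr \<alpha>"
proof -
  have sup: "0 \<le> sup_norm H f" "P \<in> H \<Longrightarrow> \<bar>f P\<bar> \<le> sup_norm H f" for P
    using assms(1) sup_norm_nonneg sup_norm_upper[of f H P] unfolding in_Calpha_def by auto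
  have semi: "0 \<le> holder_semi d \<alpha> H f" using holder_semi_nonneg[OF T, of d \<alpha> f] assms(1)
    unfolding in_Calpha_def by simp
  have le: "sup_norm H f \<le> N" "holder_semi d \<alpha> H f \<le> N"
    using assms(2) sup(1) semi unfolding holder_norm_def by linarith+
  show "P \<in> H \<Longrightarrow> \<bar>f P\<bar> \<le> N" using sup(2) le(1) by fastforce
  assume "P \<in> H" "Q \<in> H"
  then have "\<bar>f P - f Q\<bar> \<le> holder_semi d \<alpha> H f * cd P Q powr \<alpha>"
    using holder_semi_upper[OF d, of \<alpha> T f P Q] assms(1) unfolding in_Calpha_def by simp
  also have "\<dots> \<le> N * cd P Q powr \<alpha>" using le(2) by (intro mult_right_mono) auto
  finally show "\<bar>f P - f Q\<bar> \<le> N * cd P Q powr \<alpha>" .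
qed

lemmas u_holder_N = bounds_by_N(2)[OF in_Calpha_u holder_norms_le_N(1)]
lemmas ut_abs_le_N = bounds_by_N(1)[OF in_Calpha_ut holder_norms_le_N(2)]

lemma
  assumes "i \<in> {1..d}"
  shows ux_abs_le_N: "P \<in> H \<Longrightarrow> \<bar>ux i P\<bar> \<le> N"
    and ux_holder_N: "P \<in> H \<Longrightarrow> Q \<in> H \<Longrightarrow> \<bar>ux i P - ux i Q\<bar> \<le> N * cd P Q powr \<alpha>"
  using bounds_by_N[OF in_Calpha_ux[OF assms] holder_norms_le_N(3)[OF assms]] by auto

lemma
  assumes "i \<in> {1..d}" "j \<in> {1..d}"
  shows xd_uxx_abs_le_N: "P \<in> H \<Longrightarrow> \<bar>xd_uxx i j P\<bar> \<le> N"
    and xd_uxx_holder_N: "P \<in> H \<Longrightarrow> Q \<in> H \<Longrightarrow> \<bar>xd_uxx i j P - xd_uxx i j Q\<bar> \<le> N * cd P Q powr \<alpha>"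
  using bounds_by_N[OF in_Calpha_xd_uxx[OF assms] holder_norms_le_N(4)[OF assms]] by auto

lemma N_nonneg: "0 \<le> N"
  using ut_abs_le_N[OF origin_mem_H] by linarith

lemma u_abs_le_M: "P \<in> H \<Longrightarrow> \<bar>u P\<bar> \<le> M"
  unfolding M_def using in_Calpha_u by (intro sup_norm_upper) (auto simp: in_Calpha_def)

lemma M_nonneg: "0 \<le> M"
  using u_abs_le_M[OF origin_mem_H] by linarith

lemma der_t: "(t, x) \<in> I \<Longrightarrow> ((\<lambda>s. u (s, x)) has_real_derivative ut (t, x)) (at t)"
  and der_x: "(t, x) \<in> I \<Longrightarrow> i \<in> {1..d} \<Longrightarrow>
    ((\<lambda>s. u (t, x(i := s))) has_real_derivative ux i (t, x)) (at (x i))"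
  and der_xx: "(t, x) \<in> I \<Longrightarrow> i \<in> {1..d} \<Longrightarrow> j \<in> {1..d} \<Longrightarrow>
    ((\<lambda>s. ux i (t, x(j := s))) has_real_derivative uxx i j (t, x)) (at (x j))"
  using C2a unfolding in_C2a_def are_derivs_def by blast+

lemma ux_eq_0_above:
  assumes "(t, x) \<in> I" "R < x d" "i \<in> {1..d}"
  shows "ux i (t, x) = 0"
  using partial_deriv_eq_0_if_vanishing_above[OF assms(1,3) _ assms(2) der_x[OF assms(1,3)]] R
    support I_subset_H by auto

lemma uxx_eq_0_above:
  assumes "(t, x) \<in> I" "R < x d" "i \<in> {1..d}" "j \<in> {1..d}"
  shows "uxx i j (t, x) = 0"
  using partial_deriv_eq_0_if_vanishing_above[OF assms(1,4) _ assms(2) der_xx[OF assms(1,3,4)]] R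
    ux_eq_0_above[OF _ _ assms(3)] by auto


lemma l1_dist_le_cd:
  assumes "(t1, x) \<in> H" "(t2, y) \<in> H" "x d \<le> R \<or> y d \<le> R" "cd (t1, x) (t2, y) \<le> 1"
  shows "l1_dist d x y \<le> (4 + 4 * sqrt R) * cd (t1, x) (t2, y)"
  using assms(3)
proof
  assume "x d \<le> R"
  then show ?thesis using l1_dist_le_cyc_dist[OF d] xd_nonneg assms(1,2,4) by blast
next
  assume "y d \<le> R"
  then show ?thesis using l1_dist_le_cyc_dist[OF d, of y x R t2 t1] xd_nonneg assms(1,2,4)
    by (simp add: l1_dist_commute cyc_dist_commute)
qed

lemma u_time_lipschitz:
  assumes "(t1, x) \<in> I" "(t2, x) \<in> I"
  shows "\<bar>u (t1, x) - u (t2, x)\<bar> \<le> N * \<bar>t1 - t2\<bar>"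
proof -
  have "\<bar>u (t2, x) - u (t1, x)\<bar> \<le> N * \<bar>t2 - t1\<bar>"
  proof (rule abs_diff_le_if_deriv_bounded)
    fix s assume "s \<in> {min t1 t2..max t1 t2}"
    then have "(s, x) \<in> I" using assms by (auto simp: HTint_iff)
    then show "((\<lambda>s. u (s, x)) has_real_derivative ut (s, x)) (at s)" "\<bar>ut (s, x)\<bar> \<le> N"
      using der_t ut_abs_le_N I_subset_H by auto
  qed
  then show ?thesis by (simp add: abs_minus_commute)
qed

lemma u_space_lipschitz:
  assumes "(t, x) \<in> I" "(t, y) \<in> I"
  shows "\<bar>u (t, y) - u (t, x)\<bar> \<le> N * l1_dist d x y"
proof (rule abs_diff_le_l1_dist_if_partials_bounded[where \<phi> = "\<lambda>z. u (t, z)" and D = "\<lambda>j z. ux j (t, z)"])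
  show "x \<in> Hint d" "y \<in> Hint d" using assms by (auto simp: HTint_iff)
  fix z j assume "z \<in> Hint d" "j \<in> {1..d}"
  moreover from this have "(t, z) \<in> I" using assms by (auto simp: HTint_iff)
  ultimately show "((\<lambda>s. u (t, z(j := s))) has_real_derivative ux j (t, z)) (at (z j))"
    and "\<bar>ux j (t, z)\<bar> \<le> N"
    using der_x ux_abs_le_N I_subset_H by auto
qed

lemma u_lipschitz:
  assumes P: "(t1, x) \<in> I" and Q: "(t2, y) \<in> I" and close: "cd (t1, x) (t2, y) \<le> 1"
  shows "\<bar>u (t1, x) - u (t2, y)\<bar> \<le> (5 + 4 * sqrt R) * N * cd (t1, x) (t2, y)"
proof (cases "R < x d \<and> R < y d")
  case True
  then show ?thesis
    using support I_subset_H P Q N_nonneg cd_nonneg R by (simp add: mult_nonneg_nonneg)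
next
  case False
  have PH: "(t1, x) \<in> H" and QH: "(t2, y) \<in> H" using P Q I_subset_H by auto
  have "\<bar>u (t1, x) - u (t2, y)\<bar> \<le> \<bar>u (t1, x) - u (t2, x)\<bar> + \<bar>u (t2, y) - u (t2, x)\<bar>" by linarith
  also have "\<dots> \<le> N * \<bar>t1 - t2\<bar> + N * l1_dist d x y"
    using u_time_lipschitz[OF P I_time_mem[OF P Q]] u_space_lipschitz[OF I_time_mem[OF P Q] Q]
    by linarith
  also have "\<dots> \<le> N * cd (t1, x) (t2, y) + N * ((4 + 4 * sqrt R) * cd (t1, x) (t2, y))"
    using time_le_cyc_dist[of x d y t1 t2] l1_dist_le_cd[OF PH QH _ close] False close
      xd_nonneg[OF PH] xd_nonneg[OF QH] N_nonneg
    by (intro add_mono mult_left_mono) auto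
  finally show ?thesis by (simp add: algebra_simps)
qed

lemma ux_abs_le_interior:
  assumes P: "(t, x) \<in> I" and i: "i \<in> {1..d}" and h: "0 < h"
  shows "\<bar>ux i (t, x)\<bar> \<le> 2 * M / h + N * h powr (\<alpha> / 2)"
proof -
  obtain z where z: "x i < z" "z < x i + h" "u (t, x(i := x i + h)) - u (t, x) = h * ux i (t, x(i := z))"
    using coordinate_mvt[OF h, of x i "\<lambda>y. u (t, y)" "\<lambda>y. ux i (t, y)"]
      der_x[OF upd_mem_I[OF P i], of _ i] i by auto
  have zI: "(t, x(i := z)) \<in> I" and hI: "(t, x(i := x i + h)) \<in> I"
    using upd_mem_I[OF P i] z h by auto
  have "h * \<bar>ux i (t, x(i := z))\<bar> \<le> 2 * M"
    using z(3) u_abs_le_M[OF I_subset_H[OF hI]] u_abs_le_M[OF I_subset_H[OF P]] h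
    by (simp add: abs_mult)
  then have "\<bar>ux i (t, x(i := z))\<bar> \<le> 2 * M / h" using h by (simp add: field_simps)
  moreover have "cd (t, x) (t, x(i := z)) powr \<alpha> \<le> h powr (\<alpha> / 2)"
    using z \<alpha> by (intro cyc_dist_upd_powr_le[OF d xd_nonneg[OF I_subset_H[OF P]] xd_nonneg[OF I_subset_H[OF zI]] i]) auto
  then have "\<bar>ux i (t, x) - ux i (t, x(i := z))\<bar> \<le> N * h powr (\<alpha> / 2)"
    using ux_holder_N[OF i I_subset_H[OF P] I_subset_H[OF zI]] N_nonneg by (meson mult_left_mono order_trans)
  ultimately show ?thesis by linarith
qed

lemma xd_uxx_abs_le_interior:
  assumes P: "(t, x) \<in> I" and i: "i \<in> {1..d}" and j: "j \<in> {1..d}" and h: "0 < h" "h \<le> 1"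
    and G: "\<And>Q. Q \<in> H \<Longrightarrow> \<bar>ux i Q\<bar> \<le> G"
  shows "\<bar>x d * uxx i j (t, x)\<bar> \<le> 2 * (R + 1) * G / h + N * h powr (\<alpha> / 2)"
proof (cases "R < x d")
  case True
  moreover have "0 \<le> G" using G[OF I_subset_H[OF P]] by linarith
  ultimately show ?thesis using uxx_eq_0_above[OF P _ i j] h R N_nonneg by simp
next
  case False
  obtain z where z: "x j < z" "z < x j + h"
      "ux i (t, x(j := x j + h)) - ux i (t, x) = h * uxx i j (t, x(j := z))"
    using coordinate_mvt[OF h(1), of x j "\<lambda>y. ux i (t, y)" "\<lambda>y. uxx i j (t, y)"]
      der_xx[OF upd_mem_I[OF P j], of _ i j] i j by auto
  have zI: "(t, x(j := z)) \<in> I" and hI: "(t, x(j := x j + h)) \<in> I"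
    using upd_mem_I[OF P j] z h by auto
  have "h * \<bar>uxx i j (t, x(j := z))\<bar> \<le> 2 * G"
    using z(3) G[OF I_subset_H[OF hI]] G[OF I_subset_H[OF P]] h by (simp add: abs_mult)
  then have uxx: "\<bar>uxx i j (t, x(j := z))\<bar> \<le> 2 * G / h" using h by (simp add: field_simps)
  define y where "y = x(j := z)"
  have yd: "0 \<le> y d" "y d \<le> R + 1"
    using xd_pos[OF zI] False z h unfolding y_def by (auto simp: fun_upd_def)
  have "\<bar>y d * uxx i j (t, y)\<bar> = y d * \<bar>uxx i j (t, y)\<bar>" using yd by (simp add: abs_mult)
  also have "\<dots> \<le> (R + 1) * (2 * G / h)" using yd uxx unfolding y_def by (intro mult_mono) auto
  also have "\<dots> = 2 * (R + 1) * G / h" by simp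
  finally have bound: "\<bar>y d * uxx i j (t, y)\<bar> \<le> 2 * (R + 1) * G / h" .
  have "cd (t, x) (t, y) powr \<alpha> \<le> h powr (\<alpha> / 2)"
    unfolding y_def using z h \<alpha>
    by (intro cyc_dist_upd_powr_le[OF d xd_nonneg[OF I_subset_H[OF P]] xd_nonneg[OF I_subset_H[OF zI]] j]) auto
  moreover have "\<bar>x d * uxx i j (t, x) - y d * uxx i j (t, y)\<bar> \<le> N * cd (t, x) (t, y) powr \<alpha>"
    using xd_uxx_holder_N[OF i j I_subset_H[OF P] I_subset_H[OF zI[folded y_def]]] by simp
  ultimately have "\<bar>x d * uxx i j (t, x) - y d * uxx i j (t, y)\<bar> \<le> N * h powr (\<alpha> / 2)"
    using N_nonneg by (meson mult_left_mono order_trans)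
  with bound show ?thesis by linarith
qed

lemma ux_difference_quotient:
  assumes P: "(t, x) \<in> I" and i: "i \<in> {1..d}" and h: "0 < h"
  shows "\<bar>ux i (t, x) - (u (t, x(i := x i + h)) - u (t, x)) / h\<bar> \<le> h * N / x d"
proof -
  have xd: "0 < x d" using xd_pos[OF P] .
  obtain z where z: "x i < z" "z < x i + h" "u (t, x(i := x i + h)) - u (t, x) = h * ux i (t, x(i := z))"
    using coordinate_mvt[OF h, of x i "\<lambda>y. u (t, y)" "\<lambda>y. ux i (t, y)"]
      der_x[OF upd_mem_I[OF P i], of _ i] i by auto
  have "\<bar>ux i (t, x(i := z)) - ux i (t, x(i := x i))\<bar> \<le> N / x d * \<bar>z - x i\<bar>"
  proof (rule abs_diff_le_if_deriv_bounded)
    fix w assume "w \<in> {min (x i) z..max (x i) z}"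
    then have w: "x i \<le> w" using z by simp
    have wI: "(t, x(i := w)) \<in> I" using upd_mem_I[OF P i w] .
    show "((\<lambda>s. ux i (t, x(i := s))) has_real_derivative uxx i i (t, x(i := w))) (at w)"
      using der_xx[OF wI i i] by simp
    have "x d * \<bar>uxx i i (t, x(i := w))\<bar> \<le> (x(i := w)) d * \<bar>uxx i i (t, x(i := w))\<bar>"
      using w by (intro mult_right_mono) auto
    also have "\<dots> \<le> N" using xd_uxx_abs_le_N[OF i i I_subset_H[OF wI]] xd_pos[OF wI] by (simp add: abs_mult)
    finally show "\<bar>uxx i i (t, x(i := w))\<bar> \<le> N / x d" using xd by (simp add: field_simps mult.commute)
  qed
  also have "\<dots> \<le> N / x d * h" using z N_nonneg xd by (intro mult_left_mono) auto
  finally show ?thesis using z(3) h by (simp add: abs_minus_commute field_simps)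
qed

lemma ux_time_difference:
  assumes P1: "(t1, x) \<in> I" and P2: "(t2, x) \<in> I" and i: "i \<in> {1..d}" and h: "0 < h"
  shows "\<bar>ux i (t1, x) - ux i (t2, x)\<bar> \<le> 2 * (h * N / x d) + 2 * N * \<bar>t1 - t2\<bar> / h"
proof -
  let ?y = "x(i := x i + h)"
  have yI: "(t1, ?y) \<in> I" "(t2, ?y) \<in> I" using upd_mem_I[OF P1 i] upd_mem_I[OF P2 i] h by auto
  have "\<bar>(u (t1, ?y) - u (t1, x)) / h - (u (t2, ?y) - u (t2, x)) / h\<bar>
      = \<bar>(u (t1, ?y) - u (t2, ?y)) - (u (t1, x) - u (t2, x))\<bar> / h"
    using h by (simp add: diff_divide_distrib[symmetric] algebra_simps)
  also have "\<dots> \<le> 2 * N * \<bar>t1 - t2\<bar> / h"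
    using u_time_lipschitz[OF yI] u_time_lipschitz[OF P1 P2] h by (intro divide_right_mono) auto
  finally show ?thesis
    using ux_difference_quotient[OF P1 i h] ux_difference_quotient[OF P2 i h] by linarith
qed

text \<open>With \<open>h = \<surd>(x\<^sub>d |t\<^sub>1 - t\<^sub>2|)\<close> the two terms of the time difference balance.\<close>
lemma xd_ux_time_holder:
  assumes P1: "(t1, x) \<in> I" and P2: "(t2, x) \<in> I" and i: "i \<in> {1..d}"
  shows "\<bar>x d * ux i (t1, x) - x d * ux i (t2, x)\<bar> \<le> 4 * N * sqrt R * sqrt \<bar>t1 - t2\<bar>"
proof (cases "R < x d \<or> t1 = t2")
  case True
  then show ?thesis using ux_eq_0_above[OF P1 _ i] ux_eq_0_above[OF P2 _ i] N_nonneg R by auto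
next
  case False
  have xd: "0 < x d" using xd_pos[OF P1] .
  define h where "h = sqrt (x d * \<bar>t1 - t2\<bar>)"
  have h: "0 < h" "h * h = x d * \<bar>t1 - t2\<bar>" unfolding h_def using xd False by auto
  have "\<bar>x d * ux i (t1, x) - x d * ux i (t2, x)\<bar> = x d * \<bar>ux i (t1, x) - ux i (t2, x)\<bar>"
    using xd by (simp add: abs_mult flip: right_diff_distrib)
  also have "\<dots> \<le> x d * (2 * (h * N / x d) + 2 * N * \<bar>t1 - t2\<bar> / h)"
    using ux_time_difference[OF P1 P2 i h(1)] xd by (intro mult_left_mono) auto
  also have "\<dots> = 2 * h * N + 2 * N * (h * h) / h"
    using xd h by (simp add: field_simps)
  also have "\<dots> = 4 * N * (sqrt (x d) * sqrt \<bar>t1 - t2\<bar>)"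
    using h(1) by (simp add: h_def real_sqrt_mult)
  also have "\<dots> \<le> 4 * N * (sqrt R * sqrt \<bar>t1 - t2\<bar>)"
    using False N_nonneg by (intro mult_left_mono mult_right_mono) auto
  finally show ?thesis by (simp add: mult.assoc)
qed

lemma xd_ux_space_lipschitz:
  assumes "(t, x) \<in> I" "(t, y) \<in> I" and i: "i \<in> {1..d}"
  shows "\<bar>y d * ux i (t, y) - x d * ux i (t, x)\<bar> \<le> 2 * N * l1_dist d x y"
proof (rule abs_diff_le_l1_dist_if_partials_bounded[where \<phi> = "\<lambda>z. z d * ux i (t, z)"
      and D = "\<lambda>j z. (if j = d then ux i (t, z) else 0) + z d * uxx i j (t, z)"])
  show "x \<in> Hint d" "y \<in> Hint d" using assms by (auto simp: HTint_iff)
  fix z j assume z: "z \<in> Hint d" and j: "j \<in> {1..d}"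
  then have zI: "(t, z) \<in> I" using assms by (auto simp: HTint_iff)
  show "((\<lambda>s. (z(j := s)) d * ux i (t, z(j := s))) has_real_derivative
      (if j = d then ux i (t, z) else 0) + z d * uxx i j (t, z)) (at (z j))"
  proof (cases "j = d")
    case True
    have "((\<lambda>s. s * ux i (t, z(d := s))) has_real_derivative
        1 * ux i (t, z(d := z d)) + uxx i d (t, z) * z d) (at (z d))"
      using DERIV_mult[OF DERIV_ident der_xx[OF zI i, of d]] True j by simp
    then show ?thesis using True by (simp add: mult.commute)
  next
    case False
    then show ?thesis using DERIV_cmult[OF der_xx[OF zI i j], of "z d"] by simp
  qed
  have "\<bar>ux i (t, z)\<bar> \<le> N" "\<bar>z d * uxx i j (t, z)\<bar> \<le> N"
    using ux_abs_le_N[OF i I_subset_H[OF zI]] xd_uxx_abs_le_N[OF i j I_subset_H[OF zI]] by auto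
  then show "\<bar>(if j = d then ux i (t, z) else 0) + z d * uxx i j (t, z)\<bar> \<le> 2 * N"
    using N_nonneg by auto
qed

lemma xd_ux_lipschitz:
  assumes P: "(t1, x) \<in> I" and Q: "(t2, y) \<in> I" and close: "cd (t1, x) (t2, y) \<le> 1"
    and i: "i \<in> {1..d}"
  shows "\<bar>x d * ux i (t1, x) - y d * ux i (t2, y)\<bar> \<le> (8 + 12 * sqrt R) * N * cd (t1, x) (t2, y)"
proof -
  have PH: "(t1, x) \<in> H" and QH: "(t2, y) \<in> H" using P Q I_subset_H by auto
  have mid: "(t2, x) \<in> I" using I_time_mem[OF P Q] .
  have space: "\<bar>y d * ux i (t2, y) - x d * ux i (t2, x)\<bar> \<le> 2 * N * ((4 + 4 * sqrt R) * cd (t1, x) (t2, y))"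
  proof (cases "R < x d \<and> R < y d")
    case True
    then show ?thesis using ux_eq_0_above[OF mid _ i] ux_eq_0_above[OF Q _ i] N_nonneg cd_nonneg[OF PH QH] R
      by simp
  next
    case False
    then show ?thesis
      using xd_ux_space_lipschitz[OF mid Q i] l1_dist_le_cd[OF PH QH _ close] N_nonneg
      by (smt (verit) mult_left_mono)
  qed
  have "4 * N * sqrt R * sqrt \<bar>t1 - t2\<bar> \<le> 4 * N * sqrt R * cd (t1, x) (t2, y)"
    using sqrt_time_le_cyc_dist[of x d y t1 t2] xd_nonneg[OF PH] xd_nonneg[OF QH] N_nonneg R
    by (intro mult_left_mono) auto
  then have "\<bar>x d * ux i (t1, x) - x d * ux i (t2, x)\<bar> \<le> 4 * N * sqrt R * cd (t1, x) (t2, y)"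
    using xd_ux_time_holder[OF P mid i] by linarith
  with space show ?thesis by (simp add: algebra_simps)
qed


lemma xd_ux_abs_le_interior:
  assumes P: "(t, x) \<in> I" and i: "i \<in> {1..d}" and G: "\<And>Q. Q \<in> H \<Longrightarrow> \<bar>ux i Q\<bar> \<le> G"
  shows "\<bar>x d * ux i (t, x)\<bar> \<le> R * G"
proof (cases "R < x d")
  case True
  then show ?thesis using ux_eq_0_above[OF P True i] G[OF I_subset_H[OF P]] R by simp
next
  case False
  then show ?thesis using G[OF I_subset_H[OF P]] xd_pos[OF P] by (simp add: abs_mult mult_mono)
qed

lemma u_holder_interior:
  assumes P: "P \<in> I" and Q: "Q \<in> I" and \<delta>: "0 < \<delta>" "\<delta> \<le> 1"
  shows "\<bar>u P - u Q\<bar> \<le> ((5 + 4 * sqrt R) * N * \<delta> powr (1 - \<alpha>) + 2 * M * \<delta> powr (- \<alpha>)) * cd P Q powr \<alpha>"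
proof (rule le_holder_if_lipschitz_and_bounded[OF _ _ M_nonneg _ _ \<delta> \<alpha>])
  obtain t1 x t2 y where PQ: "P = (t1, x)" "Q = (t2, y)" by fastforce
  show "\<bar>u P - u Q\<bar> \<le> (5 + 4 * sqrt R) * N * cd P Q" if "cd P Q \<le> 1"
    using u_lipschitz[OF assms(1,2)[unfolded PQ]] that unfolding PQ .
  show "\<bar>u P - u Q\<bar> \<le> 2 * M" using u_abs_le_M I_subset_H P Q by (smt (verit))
qed (use N_nonneg R cd_nonneg I_subset_H P Q in auto)

lemma xd_ux_holder_interior:
  assumes P: "P \<in> I" and Q: "Q \<in> I" and \<delta>: "0 < \<delta>" "\<delta> \<le> 1" and i: "i \<in> {1..d}"
    and G: "\<And>Q. Q \<in> H \<Longrightarrow> \<bar>ux i Q\<bar> \<le> G"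
  shows "\<bar>xd_ux i P - xd_ux i Q\<bar>
    \<le> ((8 + 12 * sqrt R) * N * \<delta> powr (1 - \<alpha>) + 2 * (R * G) * \<delta> powr (- \<alpha>)) * cd P Q powr \<alpha>"
proof (rule le_holder_if_lipschitz_and_bounded[OF _ _ _ _ _ \<delta> \<alpha>])
  obtain t1 x t2 y where PQ: "P = (t1, x)" "Q = (t2, y)" by fastforce
  show "\<bar>xd_ux i P - xd_ux i Q\<bar> \<le> (8 + 12 * sqrt R) * N * cd P Q" if "cd P Q \<le> 1"
    using xd_ux_lipschitz[OF assms(1,2)[unfolded PQ] _ i] that unfolding PQ by simp
  show "\<bar>xd_ux i P - xd_ux i Q\<bar> \<le> 2 * (R * G)"
    using xd_ux_abs_le_interior[OF _ i G] P Q unfolding PQ by (smt (verit) snd_conv)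
  show "0 \<le> R * G" using G[OF I_subset_H[OF P]] R by simp
qed (use N_nonneg R cd_nonneg I_subset_H P Q in auto)

lemma u_tendsto: "P \<in> H \<Longrightarrow> (\<lambda>n. u (interior_shift T d (shift_seq n) P)) \<longlonglongrightarrow> u P"
  using tendsto_interior_shift_if_holder[OF T d \<alpha>(1) _ u_holder_N] .

lemma ux_tendsto: "i \<in> {1..d} \<Longrightarrow> P \<in> H \<Longrightarrow> (\<lambda>n. ux i (interior_shift T d (shift_seq n) P)) \<longlonglongrightarrow> ux i P"
  using tendsto_interior_shift_if_holder[OF T d \<alpha>(1) _ ux_holder_N] .

lemma xd_uxx_tendsto:
  "i \<in> {1..d} \<Longrightarrow> j \<in> {1..d} \<Longrightarrow> P \<in> H \<Longrightarrow>
    (\<lambda>n. xd_uxx i j (interior_shift T d (shift_seq n) P)) \<longlonglongrightarrow> xd_uxx i j P"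
  using tendsto_interior_shift_if_holder[OF T d \<alpha>(1) _ xd_uxx_holder_N] .

lemma xd_ux_tendsto:
  assumes "i \<in> {1..d}" "P \<in> H"
  shows "(\<lambda>n. xd_ux i (interior_shift T d (shift_seq n) P)) \<longlonglongrightarrow> xd_ux i P"
proof -
  have "(\<lambda>n. snd P d + shift_seq n) \<longlonglongrightarrow> snd P d"
    by (rule LIMSEQ_inverse_real_of_nat_add)
  then show ?thesis using tendsto_mult[OF _ ux_tendsto[OF assms]]
    by (simp add: interior_shift_def)
qed

lemma ux_abs_le:
  assumes i: "i \<in> {1..d}" and P: "P \<in> H" and e: "0 < e"
  shows "\<bar>ux i P\<bar> \<le> e * N + 2 * e powr (- (2 / \<alpha>)) * M"
proof (rule abs_le_if_interior_abs_le[OF T d P ux_tendsto[OF i P]])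
  fix Q assume "Q \<in> I"
  then obtain t x where Q: "Q = (t, x)" "(t, x) \<in> I" by (metis surj_pair)
  define h where "h = e powr (2 / \<alpha>)"
  have h: "0 < h" "h powr (\<alpha> / 2) = e" "2 * M / h = 2 * e powr (- (2 / \<alpha>)) * M"
    unfolding h_def using e \<alpha>(1) by (simp_all add: powr_powr powr_minus field_simps)
  show "\<bar>ux i Q\<bar> \<le> e * N + 2 * e powr (- (2 / \<alpha>)) * M"
    using ux_abs_le_interior[OF Q(2) i h(1)] h unfolding Q(1) by (simp add: mult.commute)
qed

lemma xd_uxx_abs_le:
  assumes i: "i \<in> {1..d}" and j: "j \<in> {1..d}" and P: "P \<in> H" and h: "0 < h" "h \<le> 1"
    and G: "\<And>Q. Q \<in> H \<Longrightarrow> \<bar>ux i Q\<bar> \<le> G"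
  shows "\<bar>xd_uxx i j P\<bar> \<le> 2 * (R + 1) * G / h + N * h powr (\<alpha> / 2)"
proof (rule abs_le_if_interior_abs_le[OF T d P xd_uxx_tendsto[OF i j P]])
  fix Q assume "Q \<in> I"
  then obtain t x where Q: "Q = (t, x)" "(t, x) \<in> I" by (metis surj_pair)
  show "\<bar>xd_uxx i j Q\<bar> \<le> 2 * (R + 1) * G / h + N * h powr (\<alpha> / 2)"
    using xd_uxx_abs_le_interior[OF Q(2) i j h G] unfolding Q(1) by simp
qed

lemma u_holder:
  assumes "P \<in> H" "Q \<in> H" "0 < \<delta>" "\<delta> \<le> 1"
  shows "\<bar>u P - u Q\<bar> \<le> ((5 + 4 * sqrt R) * N * \<delta> powr (1 - \<alpha>) + 2 * M * \<delta> powr (- \<alpha>)) * cd P Q powr \<alpha>"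
  using holder_if_interior_holder[OF T d \<alpha>(1) _ assms(1,2) u_tendsto[OF assms(1)] u_tendsto[OF assms(2)]
      u_holder_interior[OF _ _ assms(3,4)]] N_nonneg M_nonneg R
  by simp

lemma xd_ux_abs_le:
  assumes i: "i \<in> {1..d}" and P: "P \<in> H" and G: "\<And>Q. Q \<in> H \<Longrightarrow> \<bar>ux i Q\<bar> \<le> G"
  shows "\<bar>xd_ux i P\<bar> \<le> R * G"
proof (rule abs_le_if_interior_abs_le[OF T d P xd_ux_tendsto[OF i P]])
  fix Q assume "Q \<in> I"
  then obtain t x where Q: "Q = (t, x)" "(t, x) \<in> I" by (metis surj_pair)
  show "\<bar>xd_ux i Q\<bar> \<le> R * G" using xd_ux_abs_le_interior[OF Q(2) i G] unfolding Q(1) by simp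
qed

lemma xd_ux_holder:
  assumes "P \<in> H" "Q \<in> H" "0 < \<delta>" "\<delta> \<le> 1" and i: "i \<in> {1..d}"
    and G: "\<And>Q. Q \<in> H \<Longrightarrow> \<bar>ux i Q\<bar> \<le> G"
  shows "\<bar>xd_ux i P - xd_ux i Q\<bar>
    \<le> ((8 + 12 * sqrt R) * N * \<delta> powr (1 - \<alpha>) + 2 * (R * G) * \<delta> powr (- \<alpha>)) * cd P Q powr \<alpha>"
proof (rule holder_if_interior_holder[OF T d \<alpha>(1) _ assms(1,2) xd_ux_tendsto[OF i assms(1)]
      xd_ux_tendsto[OF i assms(2)] xd_ux_holder_interior[OF _ _ assms(3,4) i G]])
  show "0 \<le> (8 + 12 * sqrt R) * N * \<delta> powr (1 - \<alpha>) + 2 * (R * G) * \<delta> powr (- \<alpha>)"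
    using G[OF assms(1)] N_nonneg R by simp
qed

lemma holder_norm_u_le:
  assumes "0 < \<delta>" "\<delta> \<le> 1"
  shows "holder_norm d \<alpha> H u \<le> (5 + 4 * sqrt R) * \<delta> powr (1 - \<alpha>) * N + 3 * \<delta> powr (- \<alpha>) * M"
proof -
  have "holder_semi d \<alpha> H u \<le> (5 + 4 * sqrt R) * N * \<delta> powr (1 - \<alpha>) + 2 * M * \<delta> powr (- \<alpha>)"
    using holder_semi_least[OF d T u_holder[OF _ _ assms]] .
  moreover have "M \<le> \<delta> powr (- \<alpha>) * M"
    using one_le_powr_neg[OF assms] \<alpha> M_nonneg by (simp add: mult_le_cancel_right1)
  ultimately show ?thesis unfolding holder_norm_def M_def[symmetric] by (simp add: algebra_simps)
qed

lemma sup_norm_ux_le: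
  assumes "i \<in> {1..d}" "0 < e"
  shows "sup_norm H (ux i) \<le> e * N + 2 * e powr (- (2 / \<alpha>)) * M"
  using sup_norm_least[OF HTbar_nonempty] ux_abs_le[OF assms(1) _ assms(2)] T by simp

lemma holder_norm_xd_ux_le_ux_bound:
  assumes \<delta>: "0 < \<delta>" "\<delta> \<le> 1" and i: "i \<in> {1..d}" and G: "\<And>Q. Q \<in> H \<Longrightarrow> \<bar>ux i Q\<bar> \<le> G"
  shows "holder_norm d \<alpha> H (xd_ux i) \<le> (8 + 12 * sqrt R) * N * \<delta> powr (1 - \<alpha>) + 3 * (R * G) * \<delta> powr (- \<alpha>)"
proof -
  have RG: "0 \<le> R * G" using G[OF origin_mem_H] R by simp
  have "sup_norm H (xd_ux i) \<le> R * G"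
    using sup_norm_least[OF HTbar_nonempty] xd_ux_abs_le[OF i _ G] T by simp
  also have "\<dots> \<le> R * G * \<delta> powr (- \<alpha>)"
    using one_le_powr_neg[OF \<delta>] \<alpha> RG by (simp add: mult_le_cancel_left1)
  finally show ?thesis
    using holder_semi_least[OF d T xd_ux_holder[OF _ _ \<delta> i G]] unfolding holder_norm_def by simp
qed

lemma holder_norm_xd_ux_le:
  assumes \<delta>: "0 < \<delta>" "\<delta> \<le> 1" and i: "i \<in> {1..d}"
  shows "holder_norm d \<alpha> H (xd_ux i)
    \<le> (9 + 12 * sqrt R) * \<delta> powr (1 - \<alpha>) * N
      + 6 * R * (3 * (R + 1)) powr (2 / \<alpha>) * \<delta> powr (- (2 / \<alpha> + \<alpha>)) * M"
proof -
  define e where "e = \<delta> / (3 * (R + 1))"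
  have e: "0 < e" unfolding e_def using \<delta> R by simp
  define G where "G = e * N + 2 * e powr (- (2 / \<alpha>)) * M"
  have norm: "holder_norm d \<alpha> H (xd_ux i) \<le> (8 + 12 * sqrt R) * N * \<delta> powr (1 - \<alpha>) + 3 * (R * G) * \<delta> powr (- \<alpha>)"
    unfolding G_def using holder_norm_xd_ux_le_ux_bound[OF \<delta> i ux_abs_le[OF i _ e]] .
  have N_part: "3 * R * (e * \<delta> powr (- \<alpha>)) \<le> \<delta> powr (1 - \<alpha>)"
  proof -
    have "e * \<delta> powr (- \<alpha>) = \<delta> powr (1 - \<alpha>) / (3 * (R + 1))"
      unfolding e_def using \<delta> by (simp add: powr_diff powr_minus divide_inverse)
    then have "(R + 1) * (3 * (e * \<delta> powr (- \<alpha>))) = \<delta> powr (1 - \<alpha>)" using R by (simp add: field_simps)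
    moreover have "R * (3 * (e * \<delta> powr (- \<alpha>))) \<le> (R + 1) * (3 * (e * \<delta> powr (- \<alpha>)))"
      using e by (intro mult_right_mono) auto
    ultimately show ?thesis by simp
  qed
  have M_part: "e powr (- (2 / \<alpha>)) * \<delta> powr (- \<alpha>) = (3 * (R + 1)) powr (2 / \<alpha>) * \<delta> powr (- (2 / \<alpha> + \<alpha>))"
  proof -
    have "e powr (- (2 / \<alpha>)) = (3 * (R + 1)) powr (2 / \<alpha>) * \<delta> powr (- (2 / \<alpha>))"
      unfolding e_def using \<delta> R by (simp add: powr_divide powr_minus field_simps)
    moreover have "\<delta> powr (- (2 / \<alpha>)) * \<delta> powr (- \<alpha>) = \<delta> powr (- (2 / \<alpha> + \<alpha>))"
      by (simp add: powr_add[symmetric])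
    ultimately show ?thesis by (simp add: mult.assoc)
  qed
  have "3 * (R * G) * \<delta> powr (- \<alpha>)
      = (3 * R * (e * \<delta> powr (- \<alpha>))) * N + 6 * R * (e powr (- (2 / \<alpha>)) * \<delta> powr (- \<alpha>)) * M"
    unfolding G_def by (simp add: algebra_simps)
  also have "\<dots> \<le> \<delta> powr (1 - \<alpha>) * N + 6 * R * (3 * (R + 1)) powr (2 / \<alpha>) * \<delta> powr (- (2 / \<alpha> + \<alpha>)) * M"
    unfolding M_part using mult_right_mono[OF N_part N_nonneg] by (simp add: mult.assoc)
  finally show ?thesis using norm by (simp add: algebra_simps)
qed

lemma sup_norm_xd_uxx_le:
  assumes h: "0 < h" "h \<le> 1" and i: "i \<in> {1..d}" and j: "j \<in> {1..d}"
  shows "sup_norm H (xd_uxx i j)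
    \<le> 2 * h powr (\<alpha> / 2) * N + 4 * (R + 1) * (2 * (R + 1)) powr (2 / \<alpha>) * h powr (- (2 / \<alpha> + 2)) * M"
proof -
  define e where "e = h powr (1 + \<alpha> / 2) / (2 * (R + 1))"
  have e: "0 < e" unfolding e_def using h R by simp
  define G where "G = e * N + 2 * e powr (- (2 / \<alpha>)) * M"
  have G: "\<And>Q. Q \<in> H \<Longrightarrow> \<bar>ux i Q\<bar> \<le> G" unfolding G_def using ux_abs_le[OF i _ e] .
  have sup: "sup_norm H (xd_uxx i j) \<le> 2 * (R + 1) * G / h + N * h powr (\<alpha> / 2)"
    using sup_norm_least[OF HTbar_nonempty] xd_uxx_abs_le[OF i j _ h G] T by simp
  have N_part: "2 * (R + 1) * e / h = h powr (\<alpha> / 2)"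
    unfolding e_def using h R by (simp add: powr_add)
  have M_part: "e powr (- (2 / \<alpha>)) / h = (2 * (R + 1)) powr (2 / \<alpha>) * h powr (- (2 / \<alpha> + 2))"
  proof -
    have "e powr (- (2 / \<alpha>)) = (2 * (R + 1)) powr (2 / \<alpha>) * h powr (- ((1 + \<alpha> / 2) * (2 / \<alpha>)))"
      unfolding e_def using h R by (simp add: powr_divide powr_minus powr_powr field_simps)
    also have "(1 + \<alpha> / 2) * (2 / \<alpha>) = 2 / \<alpha> + 1" using \<alpha> by (simp add: field_simps)
    finally have "e powr (- (2 / \<alpha>)) / h = (2 * (R + 1)) powr (2 / \<alpha>) * (h powr (- (2 / \<alpha> + 1)) / h)"
      by simp
    also have "h powr (- (2 / \<alpha> + 1)) / h = h powr (- (2 / \<alpha> + 1) - 1)"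
      using powr_diff[of h "- (2 / \<alpha> + 1)" 1] h by simp
    also have "- (2 / \<alpha> + 1) - 1 = - (2 / \<alpha> + 2)" by simp
    finally show ?thesis .
  qed
  have "2 * (R + 1) * G / h = (2 * (R + 1) * e / h) * N + 4 * (R + 1) * (e powr (- (2 / \<alpha>)) / h) * M"
    unfolding G_def using h by (simp add: field_simps)
  then show ?thesis using sup unfolding N_part M_part by (simp add: algebra_simps)
qed

lemma holder_norm_u_estimate:
  assumes "0 < \<epsilon>" "\<epsilon> < 1"
  shows "holder_norm d \<alpha> H u
    \<le> \<epsilon> * N + interpolation_constant R \<alpha> * \<epsilon> powr (- interpolation_exponent \<alpha>) * M"
proof (rule le_eps_powr_mono[OF _ interpolation_constant_ge(1)[OF R] interpolation_exponent_ge(1)[OF \<alpha>]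
      assms _ M_nonneg])
  show "holder_norm d \<alpha> H u
    \<le> \<epsilon> * N + 3 * (5 + 4 * sqrt R) powr (\<alpha> / (1 - \<alpha>)) * \<epsilon> powr (- (\<alpha> / (1 - \<alpha>))) * M"
    using le_eps_if_le_powr_family[OF _ _ assms(1) _ holder_norm_u_le] \<alpha> assms R
    by (simp add: mult.assoc)
qed simp

lemma sup_norm_ux_estimate:
  assumes "0 < \<epsilon>" "\<epsilon> < 1" "i \<in> {1..d}"
  shows "sup_norm H (ux i)
    \<le> \<epsilon> * N + interpolation_constant R \<alpha> * \<epsilon> powr (- interpolation_exponent \<alpha>) * M"
  using le_eps_powr_mono[OF sup_norm_ux_le[OF assms(3,1)] interpolation_constant_ge(2)[OF R]
      interpolation_exponent_ge(2)[OF \<alpha>] assms(1,2) _ M_nonneg]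
  by simp

lemma holder_norm_xd_ux_estimate:
  assumes "0 < \<epsilon>" "\<epsilon> < 1" "i \<in> {1..d}"
  shows "holder_norm d \<alpha> H (xd_ux i)
    \<le> \<epsilon> * N + interpolation_constant R \<alpha> * \<epsilon> powr (- interpolation_exponent \<alpha>) * M"
proof (rule le_eps_powr_mono[OF _ interpolation_constant_ge(3)[OF R] interpolation_exponent_ge(3)[OF \<alpha>]
      assms(1,2) _ M_nonneg])
  show "holder_norm d \<alpha> H (xd_ux i)
    \<le> \<epsilon> * N + 6 * R * (3 * (R + 1)) powr (2 / \<alpha>) * (9 + 12 * sqrt R) powr ((2 / \<alpha> + \<alpha>) / (1 - \<alpha>))
        * \<epsilon> powr (- ((2 / \<alpha> + \<alpha>) / (1 - \<alpha>))) * M"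
    using le_eps_if_le_powr_family[OF _ _ assms(1) _ holder_norm_xd_ux_le[OF _ _ assms(3)]] \<alpha> assms R
    by (simp add: mult.assoc)
qed (use R in simp)

lemma sup_norm_xd_uxx_estimate:
  assumes "0 < \<epsilon>" "\<epsilon> < 1" "i \<in> {1..d}" "j \<in> {1..d}"
  shows "sup_norm H (xd_uxx i j)
    \<le> \<epsilon> * N + interpolation_constant R \<alpha> * \<epsilon> powr (- interpolation_exponent \<alpha>) * M"
proof (rule le_eps_powr_mono[OF _ interpolation_constant_ge(4)[OF R] interpolation_exponent_ge(4)[OF \<alpha>]
      assms(1,2) _ M_nonneg])
  show "sup_norm H (xd_uxx i j)
    \<le> \<epsilon> * N + 4 * (R + 1) * (2 * (R + 1)) powr (2 / \<alpha>) * 2 powr ((2 / \<alpha> + 2) / (\<alpha> / 2))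
        * \<epsilon> powr (- ((2 / \<alpha> + 2) / (\<alpha> / 2))) * M"
    using le_eps_if_le_powr_family[OF _ _ assms(1) _ sup_norm_xd_uxx_le[OF _ _ assms(3,4)]] \<alpha> assms R
    by (simp add: mult.assoc)
qed (use R in simp)

end

lemma Bbar_height_le:
  assumes "1 \<le> d" "x0 d = 0" "x \<in> Bbar d x0 R"
  shows "x d \<le> R"
proof -
  have "(x d - x0 d)\<^sup>2 \<le> (\<Sum>i=1..d. (x i - x0 i)\<^sup>2)"
    using assms(1) by (intro member_le_sum) auto
  then have "\<bar>x d\<bar> \<le> eucl_dist d x x0"
    unfolding eucl_dist_def using assms(2) real_sqrt_le_mono by fastforce
  moreover have "eucl_dist d x x0 \<le> R" using assms(3) unfolding Bbar_def by simp
  ultimately show ?thesis by linarith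
qed

theorem lemma3p2:
  fixes d :: nat and \<alpha> :: real
  assumes "d \<ge> 2" and "0 < \<alpha>" and "\<alpha> < 1"
  shows "\<exists>m::real. m > 0 \<and> (\<forall>T::real. \<forall>R::real. T > 0 \<and> R > 0 \<longrightarrow>
    (\<exists>C::real. C > 0 \<and>
      (\<forall>u ut ux uxx x0 (\<epsilon>::real).
         in_C2a d \<alpha> T u ut ux uxx \<and>
         x0 \<in> Hbar d \<and> x0 d = 0 \<and>
         (\<forall>P\<in>HTbar d T. u P \<noteq> 0 \<longrightarrow> snd P \<in> Bbar d x0 R) \<and>
         0 < \<epsilon> \<and> \<epsilon> < 1 \<longrightarrow>
         (let N = C2a_norm d \<alpha> T u ut ux uxx;
              B = C * \<epsilon> powr (- m) * sup_norm (HTbar d T) u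
          in holder_norm d \<alpha> (HTbar d T) u \<le> \<epsilon> * N + B \<and>
             (\<forall>i\<in>{1..d}.
                sup_norm (HTbar d T) (ux i) \<le> \<epsilon> * N + B \<and>
                holder_norm d \<alpha> (HTbar d T) (\<lambda>P. snd P d * ux i P) \<le> \<epsilon> * N + B \<and>
                (\<forall>j\<in>{1..d}.
                   sup_norm (HTbar d T) (\<lambda>P. snd P d * uxx i j P) \<le> \<epsilon> * N + B))))))"
proof (intro exI conjI allI impI)
  show "0 < interpolation_exponent \<alpha>" using interpolation_exponent_ge(5) assms(2,3) .
  fix T R :: real assume TR: "T > 0 \<and> R > 0"
  then show "0 < interpolation_constant R \<alpha>" using interpolation_constant_ge(5) by blast
  fix u ut ux uxx x0 and \<epsilon> :: real
  assume h: "in_C2a d \<alpha> T u ut ux uxx \<and> x0 \<in> Hbar d \<and> x0 d = 0 \<and>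
    (\<forall>P\<in>HTbar d T. u P \<noteq> 0 \<longrightarrow> snd P \<in> Bbar d x0 R) \<and> 0 < \<epsilon> \<and> \<epsilon> < 1"
  interpret C2a_supported_in_strip d \<alpha> T R u ut ux uxx
  proof
    fix t x assume "(t, x) \<in> HTbar d T" "R < x d"
    then show "u (t, x) = 0" using h Bbar_height_le[of d x0 x R] assms(1) by fastforce
  qed (use assms TR h in auto)
  show "let N = C2a_norm d \<alpha> T u ut ux uxx;
      B = interpolation_constant R \<alpha> * \<epsilon> powr (- interpolation_exponent \<alpha>) * sup_norm (HTbar d T) u
    in holder_norm d \<alpha> (HTbar d T) u \<le> \<epsilon> * N + B \<and>
      (\<forall>i\<in>{1..d}. sup_norm (HTbar d T) (ux i) \<le> \<epsilon> * N + B \<and>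
        holder_norm d \<alpha> (HTbar d T) (\<lambda>P. snd P d * ux i P) \<le> \<epsilon> * N + B \<and>
        (\<forall>j\<in>{1..d}. sup_norm (HTbar d T) (\<lambda>P. snd P d * uxx i j P) \<le> \<epsilon> * N + B))"
    using holder_norm_u_estimate sup_norm_ux_estimate holder_norm_xd_ux_estimate sup_norm_xd_uxx_estimate h
    unfolding Let_def N_def[symmetric] M_def[symmetric] by (simp add: mult.assoc)
qed

end
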